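(* There is a polynomial $G_{n,d}(X)$ which is set-multilinear over the variable partition $X=(X_1,\ldots,X_d)$ with each $|X_i|\leq n$, such that: (i) it has a set-multilinear branching program of size $\mathrm{poly}(n,d)$; but (ii) any ordered set-multilinear branching program computing $G_{n,d}$ requires width $n^{\Omega(d)}$.
   Context: A polynomial is set-multilinear with respect to a partition $(X_1,\ldots,X_d)$ if every monomial contains exactly one variable from each $X_i$. An algebraic branching program (ABP) is a layered DAG with a start node and an end node, edges between consecutive layers labelled by linear polynomials, computing the sum over start-to-end paths of the product of edge labels; its size is its number of nodes and its width is the maximum number of nodes in a layer. A (general) set-multilinear ABP is one in which every node computes a polynomial that is set-multilinear with respect to some subcollection of $\{X_1,\ldots,X_d\}$. An ordered set-multilinear ABP is a set-multilinear ABP of depth $d$ for which there is a permutation $\sigma\in S_d$ such that every edge from layer $\ell-1$ to layer $\ell$ is labelled by a linear form in the variables of $X_{\sigma(\ell)}$. *)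

theory Defs
  imports Complex_Main "HOL-Library.Poly_Mapping" "HOL-Combinatorics.Permutations"
begin

text \<open>Multivariate polynomials over a field, in variables indexed by nat:
  a polynomial maps monomials (finitely supported exponent vectors) to coefficients.\<close>
type_synonym 'a mpoly = "(nat \<Rightarrow>\<^sub>0 nat) \<Rightarrow>\<^sub>0 'a"

definition mdeg :: "(nat \<Rightarrow>\<^sub>0 nat) \<Rightarrow> nat" where
  "mdeg m = (\<Sum>x\<in>Poly_Mapping.keys m. Poly_Mapping.lookup m x)"

definition linear_poly :: "'a::zero mpoly \<Rightarrow> bool" where
  "linear_poly p \<longleftrightarrow> (\<forall>m\<in>Poly_Mapping.keys p. mdeg m \<le> 1)"

definition linear_form_in :: "nat set \<Rightarrow> 'a::zero mpoly \<Rightarrow> bool" where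
  "linear_form_in V p \<longleftrightarrow> (\<forall>m\<in>Poly_Mapping.keys p. \<exists>x\<in>V. m = Poly_Mapping.single x 1)"

definition set_multilinear :: "(nat \<Rightarrow> nat set) \<Rightarrow> nat set \<Rightarrow> 'a::zero mpoly \<Rightarrow> bool" where
  "set_multilinear X S p \<longleftrightarrow>
     (\<forall>m\<in>Poly_Mapping.keys p. (\<forall>x\<in>Poly_Mapping.keys m. \<exists>i\<in>S. x \<in> X i) \<and> (\<forall>i\<in>S. (\<Sum>x\<in>X i. Poly_Mapping.lookup m x) = 1))"

definition var_partition :: "nat \<Rightarrow> nat \<Rightarrow> (nat \<Rightarrow> nat set) \<Rightarrow> bool" where
  "var_partition n d X \<longleftrightarrow>
     (\<forall>i<d. finite (X i) \<and> card (X i) \<le> n) \<and> (\<forall>i<d. \<forall>j<d. i \<noteq> j \<longrightarrow> X i \<inter> X j = {})"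

text \<open>Layered ABP: layers 0..depth; layer l has nodes 0..<wd l; lab l u v is the label of the
  edge from node u of layer l to node v of layer l+1 (label 0 = no edge).
  Start node = node 0 of layer 0, end node = node 0 of layer depth.\<close>
type_synonym 'a abp = "nat \<times> (nat \<Rightarrow> nat) \<times> (nat \<Rightarrow> nat \<Rightarrow> nat \<Rightarrow> 'a mpoly)"

definition depth :: "'a abp \<Rightarrow> nat" where "depth A = fst A"
definition wd :: "'a abp \<Rightarrow> nat \<Rightarrow> nat" where "wd A = fst (snd A)"
definition lab :: "'a abp \<Rightarrow> nat \<Rightarrow> nat \<Rightarrow> nat \<Rightarrow> 'a mpoly" where "lab A = snd (snd A)"

fun node_poly :: "'a::comm_semiring_1 abp \<Rightarrow> nat \<Rightarrow> nat \<Rightarrow> 'a mpoly" where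
  "node_poly A 0 v = (if v = 0 then 1 else 0)"
| "node_poly A (Suc l) v = (\<Sum>u<wd A l. node_poly A l u * lab A l u v)"

definition abp_wf :: "'a::comm_semiring_1 abp \<Rightarrow> bool" where
  "abp_wf A \<longleftrightarrow> wd A 0 = 1 \<and> wd A (depth A) = 1 \<and>
     (\<forall>l u v. (depth A \<le> l \<or> wd A l \<le> u \<or> wd A (Suc l) \<le> v) \<longrightarrow> lab A l u v = 0) \<and>
     (\<forall>l u v. linear_poly (lab A l u v))"

definition abp_computes :: "'a::comm_semiring_1 abp \<Rightarrow> 'a mpoly \<Rightarrow> bool" where
  "abp_computes A f \<longleftrightarrow> node_poly A (depth A) 0 = f"

definition abp_size :: "'a abp \<Rightarrow> nat" where
  "abp_size A = (\<Sum>l\<le>depth A. wd A l)"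

definition abp_width :: "'a abp \<Rightarrow> nat" where
  "abp_width A = Max (wd A ` {..depth A})"

definition sm_abp :: "(nat \<Rightarrow> nat set) \<Rightarrow> nat \<Rightarrow> 'a::comm_semiring_1 abp \<Rightarrow> bool" where
  "sm_abp X d A \<longleftrightarrow> abp_wf A \<and>
     (\<forall>l\<le>depth A. \<forall>v<wd A l. \<exists>S\<subseteq>{..<d}. set_multilinear X S (node_poly A l v))"

definition ordered_sm_abp :: "(nat \<Rightarrow> nat set) \<Rightarrow> nat \<Rightarrow> 'a::comm_semiring_1 abp \<Rightarrow> bool" where
  "ordered_sm_abp X d A \<longleftrightarrow> sm_abp X d A \<and> depth A = d \<and>
     (\<exists>\<sigma>. \<sigma> permutes {..<d} \<and> (\<forall>l<d. \<forall>u v. linear_form_in (X (\<sigma> l)) (lab A l u v)))"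

end

theory Submission
  imports Defs "HOL-Library.Nat_Bijection" "HOL-Number_Theory.Cong"
begin

text \<open>
  The hard polynomial is the sum over the shifts s < k = d div 3 of the products
  prod_{j<k} sum_{t<n} x(j,t) x(k + (j + s) mod k, t), each multiplied by a tag monomial
  in the last d - 2k blocks that records s. Reading the two blocks of every pair
  consecutively, each summand has a set-multilinear ABP of width n, and the k branches
  share only their end points.

  An ordered ABP that reads the blocks in the order \<sigma> has, at every layer l, at least as
  many nodes as the rank of the coefficient matrix whose rows are indexed by monomials in
  the blocks read before layer l and whose columns by monomials in the other blocks.
  Choose l such that exactly k of the first 2k blocks have been read. Averaging over all
  shifts, some shift s separates at least k/2 of its pairs, and for this shift the
  coefficient matrix contains an identity matrix of size n^(k/2): the tag isolates the
  summand of s, and a separated pair contributes the factor sum_t y(t) z(t).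
\<close>

section \<open>A rank bound\<close>

lemma card_le_of_identity_factorization:
  fixes F :: "'b \<Rightarrow> nat \<Rightarrow> 'a::field" and H :: "nat \<Rightarrow> 'b \<Rightarrow> 'a"
  assumes "finite T"
    and "\<And>a b. a \<in> T \<Longrightarrow> b \<in> T \<Longrightarrow> (\<Sum>w<W. F a w * H w b) = (if a = b then 1 else 0)"
  shows "card T \<le> W"
  using assms
proof (induction W arbitrary: T F)
  case 0
  then have "T = {}" by fastforce
  then show ?case by simp
next
  case (Suc W)
  show ?case
  proof (cases "\<forall>a\<in>T. F a W = 0")
    case True
    then have "card T \<le> W" using Suc.prems by (intro Suc.IH[of T F]) auto
    then show ?thesis by simp
  next
    case False
    then obtain a0 where a0: "a0 \<in> T" "F a0 W \<noteq> 0" by auto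
    \<comment> \<open>Gaussian elimination: clear the last column using the row of a0, then drop a0.\<close>
    define F' where "F' a w = F a w - (F a W / F a0 W) * F a0 w" for a w
    have "(\<Sum>w<W. F' a w * H w b) = (if a = b then 1 else 0)" if ab: "a \<in> T - {a0}" "b \<in> T - {a0}" for a b
    proof -
      have "(\<Sum>w<W. F' a w * H w b) = (\<Sum>w<Suc W. F' a w * H w b)" using a0 by (simp add: F'_def)
      also have "\<dots> = (\<Sum>w<Suc W. F a w * H w b) - (F a W / F a0 W) * (\<Sum>w<Suc W. F a0 w * H w b)"
        by (simp add: F'_def algebra_simps sum_subtractf sum_distrib_left)
      also have "\<dots> = (if a = b then 1 else 0)" using Suc.prems(2) ab a0 by auto
      finally show ?thesis .
    qed
    then have "card (T - {a0}) \<le> W" using Suc.prems(1) by (intro Suc.IH[of _ F']) auto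
    then show ?thesis using a0 Suc.prems(1) by (simp add: card_Diff_singleton)
  qed
qed

section \<open>Polynomials in a set of variables\<close>

definition vars_within :: "nat set \<Rightarrow> 'a::zero mpoly \<Rightarrow> bool" where
  "vars_within V p \<longleftrightarrow> (\<forall>m\<in>Poly_Mapping.keys p. Poly_Mapping.keys m \<subseteq> V)"

lemma vars_within_0 [simp]: "vars_within V 0"
  by (simp add: vars_within_def)

lemma vars_within_1 [simp]: "vars_within V (1::'a::zero_neq_one mpoly)"
  by (simp add: vars_within_def)

lemma vars_within_mono: "vars_within V p \<Longrightarrow> V \<subseteq> W \<Longrightarrow> vars_within W p"
  by (auto simp: vars_within_def)

lemma vars_within_add: "vars_within V p \<Longrightarrow> vars_within V q \<Longrightarrow> vars_within V (p + q)"
  using keys_add[of p q] by (auto simp: vars_within_def)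

lemma vars_within_sum: "(\<And>i. i \<in> I \<Longrightarrow> vars_within V (f i)) \<Longrightarrow> vars_within V (sum f I)"
  by (induction I rule: infinite_finite_induct) (auto intro: vars_within_add)

lemma vars_within_mult:
  fixes p q :: "'a::comm_semiring_1 mpoly"
  assumes "vars_within V p" "vars_within W q"
  shows "vars_within (V \<union> W) (p * q)"
proof -
  have "Poly_Mapping.keys (a + b) \<subseteq> V \<union> W"
    if "a \<in> Poly_Mapping.keys p" "b \<in> Poly_Mapping.keys q" for a b :: "nat \<Rightarrow>\<^sub>0 nat"
    using keys_add[of a b] assms that by (auto simp: vars_within_def)
  then show ?thesis using keys_mult[of p q] unfolding vars_within_def by blast
qed

lemma linear_form_in_imp_vars_within: "linear_form_in V p \<Longrightarrow> vars_within V p"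
  by (auto simp: vars_within_def linear_form_in_def)

lemma add_eq_add_disjoint_keys:
  fixes r l c q :: "'b \<Rightarrow>\<^sub>0 nat"
  assumes "V \<inter> W = {}" "Poly_Mapping.keys r \<subseteq> V" "Poly_Mapping.keys l \<subseteq> V"
    "Poly_Mapping.keys c \<subseteq> W" "Poly_Mapping.keys q \<subseteq> W" "r + c = l + q"
  shows "l = r \<and> q = c"
proof -
  have "Poly_Mapping.lookup l x = Poly_Mapping.lookup r x \<and> Poly_Mapping.lookup q x = Poly_Mapping.lookup c x"
    for x
  proof -
    have "Poly_Mapping.lookup r x + Poly_Mapping.lookup c x = Poly_Mapping.lookup l x + Poly_Mapping.lookup q x"
      using assms(6) by (metis lookup_add)
    moreover have "x \<notin> V \<or> x \<notin> W" using assms(1) by auto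
    then have "Poly_Mapping.lookup l x = 0 \<and> Poly_Mapping.lookup r x = 0 \<or>
        Poly_Mapping.lookup q x = 0 \<and> Poly_Mapping.lookup c x = 0"
      using assms(2-5) by (metis in_keys_iff subsetD)
    ultimately show ?thesis by auto
  qed
  then show ?thesis by (auto intro: poly_mapping_eqI)
qed

lemma lookup_mult_disjoint_vars:
  fixes f g :: "'a::comm_semiring_1 mpoly"
  assumes "vars_within V f" "vars_within W g" "V \<inter> W = {}"
    and "Poly_Mapping.keys r \<subseteq> V" "Poly_Mapping.keys c \<subseteq> W"
  shows "Poly_Mapping.lookup (f * g) (r + c) = Poly_Mapping.lookup f r * Poly_Mapping.lookup g c"
proof -
  have unique: "l = r \<and> q = c"
    if "Poly_Mapping.lookup f l \<noteq> 0" "Poly_Mapping.lookup g q \<noteq> 0" "r + c = l + q" for l q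
    using assms that
    by (intro add_eq_add_disjoint_keys[of V W]) (auto simp: vars_within_def in_keys_iff)
  have "Poly_Mapping.lookup f l * (\<Sum>q. Poly_Mapping.lookup g q when r + c = l + q) =
    (if l = r then Poly_Mapping.lookup f r * Poly_Mapping.lookup g c else 0)" for l
  proof (cases "l = r")
    case True
    then have "(\<Sum>q. Poly_Mapping.lookup g q when r + c = l + q) =
        (\<Sum>q. if q = c then Poly_Mapping.lookup g q else 0)"
      by (intro Sum_any.cong) (auto simp: when_def)
    then show ?thesis using True by simp
  next
    case False
    then have "(Poly_Mapping.lookup g q when r + c = l + q) = 0"
      if "Poly_Mapping.lookup f l \<noteq> 0" for q
      using unique that by (auto simp: when_def)
    then show ?thesis using False by (cases "Poly_Mapping.lookup f l = 0") auto
  qed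
  then show ?thesis unfolding lookup_mult by simp
qed

definition restrict_monom :: "'b set \<Rightarrow> ('b \<Rightarrow>\<^sub>0 nat) \<Rightarrow> 'b \<Rightarrow>\<^sub>0 nat" where
  "restrict_monom V m = Abs_poly_mapping (\<lambda>x. if x \<in> V then Poly_Mapping.lookup m x else 0)"

lemma lookup_restrict_monom:
  "Poly_Mapping.lookup (restrict_monom V m) x = (if x \<in> V then Poly_Mapping.lookup m x else 0)"
proof -
  have "finite {x. (if x \<in> V then Poly_Mapping.lookup m x else 0) \<noteq> 0}"
    by (rule finite_subset[of _ "Poly_Mapping.keys m"]) (auto simp: in_keys_iff)
  then show ?thesis unfolding restrict_monom_def by simp
qed

lemma keys_restrict_monom: "Poly_Mapping.keys (restrict_monom V m) \<subseteq> V"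
  by (auto simp: in_keys_iff lookup_restrict_monom split: if_splits)

section \<open>Paths in algebraic branching programs\<close>

fun path_poly :: "'a::comm_semiring_1 abp \<Rightarrow> nat \<Rightarrow> nat \<Rightarrow> nat \<Rightarrow> nat \<Rightarrow> 'a mpoly" where
  "path_poly A l u 0 v = (if u = v then 1 else 0)"
| "path_poly A l u (Suc j) v = (\<Sum>w<wd A (l + j). path_poly A l u j w * lab A (l + j) w v)"

lemma node_poly_eq_0_beyond_width: "abp_wf A \<Longrightarrow> wd A l \<le> v \<Longrightarrow> node_poly A l v = 0"
  by (cases l) (auto simp: abp_wf_def)

lemma node_poly_split:
  assumes "abp_wf A"
  shows "node_poly A (l + j) v = (\<Sum>u<wd A l. node_poly A l u * path_poly A l u j v)"
proof (induction j arbitrary: v)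
  case 0
  show ?case
  proof (cases "v < wd A l")
    case True
    then show ?thesis by (simp add: if_distrib cong: if_cong)
  next
    case False
    then show ?thesis using node_poly_eq_0_beyond_width[OF assms, of l v] by (auto intro!: sum.neutral)
  qed
next
  case (Suc j)
  have "node_poly A (l + Suc j) v = (\<Sum>w<wd A (l + j). node_poly A (l + j) w * lab A (l + j) w v)"
    by simp
  also have "\<dots> = (\<Sum>w<wd A (l + j). \<Sum>u<wd A l. node_poly A l u * path_poly A l u j w * lab A (l + j) w v)"
    by (simp add: Suc sum_distrib_right)
  also have "\<dots> = (\<Sum>u<wd A l. \<Sum>w<wd A (l + j). node_poly A l u * (path_poly A l u j w * lab A (l + j) w v))"
    by (subst sum.swap) (simp add: mult.assoc)
  also have "\<dots> = (\<Sum>u<wd A l. node_poly A l u * path_poly A l u (Suc j) v)"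
    by (simp add: sum_distrib_left)
  finally show ?case .
qed

context
  fixes X :: "nat \<Rightarrow> nat set" and \<sigma> :: "nat \<Rightarrow> nat" and d :: nat and A :: "'a::comm_semiring_1 abp"
  assumes labels_in_blocks: "\<forall>l<d. \<forall>u v. linear_form_in (X (\<sigma> l)) (lab A l u v)"
begin

lemma node_poly_vars_within: "l \<le> d \<Longrightarrow> vars_within (\<Union>i<l. X (\<sigma> i)) (node_poly A l v)"
proof (induction l arbitrary: v)
  case 0
  then show ?case by simp
next
  case (Suc l)
  have "vars_within ((\<Union>i<l. X (\<sigma> i)) \<union> X (\<sigma> l)) (node_poly A l u * lab A l u v)" for u
    using Suc labels_in_blocks by (intro vars_within_mult[OF Suc.IH linear_form_in_imp_vars_within]) auto
  then have "vars_within (\<Union>i<Suc l. X (\<sigma> i)) (node_poly A l u * lab A l u v)" for u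
    by (rule vars_within_mono) (auto simp: lessThan_Suc)
  then show ?case by (simp add: vars_within_sum)
qed

lemma path_poly_vars_within:
  "l + j \<le> d \<Longrightarrow> vars_within (\<Union>i\<in>{l..<l + j}. X (\<sigma> i)) (path_poly A l u j v)"
proof (induction j arbitrary: v)
  case 0
  then show ?case by simp
next
  case (Suc j)
  have "vars_within ((\<Union>i\<in>{l..<l + j}. X (\<sigma> i)) \<union> X (\<sigma> (l + j))) (path_poly A l u j w * lab A (l + j) w v)"
    for w
    using Suc labels_in_blocks by (intro vars_within_mult[OF Suc.IH linear_form_in_imp_vars_within]) auto
  then have "vars_within (\<Union>i\<in>{l..<l + Suc j}. X (\<sigma> i)) (path_poly A l u j w * lab A (l + j) w v)" for w
    by (rule vars_within_mono) (auto simp: atLeastLessThanSuc)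
  then show ?case by (simp add: vars_within_sum)
qed

end

text \<open>
  The coefficient matrix of the computed polynomial, with rows indexed by monomials in the
  blocks read before layer l and columns by monomials in the remaining blocks, factors
  through the nodes of layer l.
\<close>
lemma card_le_abp_width_of_coefficient_identity:
  fixes A :: "'a::field abp" and r c :: "'b \<Rightarrow> nat \<Rightarrow>\<^sub>0 nat"
  assumes wf: "abp_wf A" and depth: "depth A = d" and "l \<le> d"
    and labels: "\<forall>l<d. \<forall>u v. linear_form_in (X (\<sigma> l)) (lab A l u v)"
    and disjoint: "(\<Union>i<l. X (\<sigma> i)) \<inter> (\<Union>i\<in>{l..<d}. X (\<sigma> i)) = {}"
    and "finite T"
    and r: "\<And>a. a \<in> T \<Longrightarrow> Poly_Mapping.keys (r a) \<subseteq> (\<Union>i<l. X (\<sigma> i))"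
    and c: "\<And>b. b \<in> T \<Longrightarrow> Poly_Mapping.keys (c b) \<subseteq> (\<Union>i\<in>{l..<d}. X (\<sigma> i))"
    and coeff: "\<And>a b. a \<in> T \<Longrightarrow> b \<in> T \<Longrightarrow>
      Poly_Mapping.lookup (node_poly A d 0) (r a + c b) = (if a = b then 1 else 0)"
  shows "card T \<le> abp_width A"
proof -
  have d: "l + (d - l) = d" using \<open>l \<le> d\<close> by simp
  have "(\<Sum>u<wd A l. Poly_Mapping.lookup (node_poly A l u) (r a) *
        Poly_Mapping.lookup (path_poly A l u (d - l) 0) (c b)) = (if a = b then 1 else 0)"
    if ab: "a \<in> T" "b \<in> T" for a b
  proof -
    have "node_poly A d 0 = (\<Sum>u<wd A l. node_poly A l u * path_poly A l u (d - l) 0)"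
      using node_poly_split[OF wf, of l "d - l" 0] d by simp
    then have "Poly_Mapping.lookup (node_poly A d 0) (r a + c b) =
        (\<Sum>u<wd A l. Poly_Mapping.lookup (node_poly A l u * path_poly A l u (d - l) 0) (r a + c b))"
      by (simp add: lookup_sum)
    also have "\<dots> = (\<Sum>u<wd A l. Poly_Mapping.lookup (node_poly A l u) (r a) *
        Poly_Mapping.lookup (path_poly A l u (d - l) 0) (c b))"
      using node_poly_vars_within[OF labels \<open>l \<le> d\<close>] path_poly_vars_within[OF labels, of l "d - l"]
      by (intro sum.cong refl lookup_mult_disjoint_vars[OF _ _ disjoint r[OF ab(1)] c[OF ab(2)]])
        (simp_all add: d)
    finally show ?thesis using coeff[OF ab] by simp
  qed
  then have "card T \<le> wd A l"
    using \<open>finite T\<close> by (rule card_le_of_identity_factorization[rotated])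
  also have "wd A l \<le> abp_width A"
    unfolding abp_width_def using \<open>l \<le> d\<close> depth by (intro Max_ge) auto
  finally show ?thesis .
qed

section \<open>Crossing pairs under cyclic shifts\<close>

lemma discrete_ivt:
  fixes f :: "nat \<Rightarrow> nat"
  assumes "f 0 = 0" "\<And>l. f (Suc l) \<le> f l + 1" "j \<le> f D"
  shows "\<exists>l\<le>D. f l = j"
  using assms(3)
proof (induction D)
  case 0
  then show ?case using assms(1) by auto
next
  case (Suc D)
  show ?case
  proof (cases "j \<le> f D")
    case True
    then show ?thesis using Suc.IH by (meson le_SucI)
  next
    case False
    then have "j = f (Suc D)" using Suc.prems assms(2)[of D] by linarith
    then show ?thesis by blast
  qed
qed

lemma exists_prefix_card_inter:
  fixes \<sigma> :: "nat \<Rightarrow> 'a"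
  assumes "M \<subseteq> \<sigma> ` {..<d}" "j \<le> card M"
  shows "\<exists>l\<le>d. card (\<sigma> ` {..<l} \<inter> M) = j"
proof (rule discrete_ivt[where f = "\<lambda>l. card (\<sigma> ` {..<l} \<inter> M)"])
  show "card (\<sigma> ` {..<0} \<inter> M) = 0" by simp
  show "card (\<sigma> ` {..<Suc l} \<inter> M) \<le> card (\<sigma> ` {..<l} \<inter> M) + 1" for l
  proof -
    have "card (\<sigma> ` {..<Suc l} \<inter> M) \<le> card (insert (\<sigma> l) (\<sigma> ` {..<l} \<inter> M))"
      by (intro card_mono) (auto simp: lessThan_Suc)
    also have "\<dots> \<le> card (\<sigma> ` {..<l} \<inter> M) + 1" by (simp add: card_insert_le_m1)
    finally show ?thesis .
  qed
  show "j \<le> card (\<sigma> ` {..<d} \<inter> M)" using assms by (simp add: Int_absorb1)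
qed

lemma add_mod_cancel_right: "a < k \<Longrightarrow> b < k \<Longrightarrow> (a + s) mod k = (b + s) mod k \<Longrightarrow> a = (b::nat)"
  by (metis cong_add_rcancel_nat cong_def cong_less_modulus_unique_nat)

lemma bij_betw_add_mod:
  assumes "0 < k"
  shows "bij_betw (\<lambda>s. (i + s) mod k) {..<k} {..<(k::nat)}"
proof -
  have "inj_on (\<lambda>s. (i + s) mod k) {..<k}"
    by (rule inj_onI) (metis add.commute add_mod_cancel_right lessThan_iff)
  moreover have "(\<lambda>s. (i + s) mod k) ` {..<k} \<subseteq> {..<k}" using assms by auto
  ultimately show ?thesis by (simp add: bij_betw_def endo_inj_surj)
qed

lemma sum_card_crossings:
  fixes k :: nat and P :: "nat set"
  assumes "0 < k"
  defines "p \<equiv> card (P \<inter> {..<k})" and "q \<equiv> card {j\<in>{..<k}. k + j \<in> P}"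
  shows "(\<Sum>s<k. card {i\<in>{..<k}. (i \<in> P) \<noteq> (k + (i + s) mod k \<in> P)}) = p * (k - q) + (k - p) * q"
proof -
  have crossings_of: "(\<Sum>s<k. if (i \<in> P) \<noteq> (k + (i + s) mod k \<in> P) then 1 else 0) =
      (if i \<in> P then k - q else q)" for i
  proof -
    have "(\<Sum>s<k. if (i \<in> P) \<noteq> (k + (i + s) mod k \<in> P) then 1 else 0) =
        (\<Sum>j<k. if (i \<in> P) \<noteq> (k + j \<in> P) then 1 else (0::nat))"
      using sum.reindex_bij_betw[OF bij_betw_add_mod[OF assms(1)],
          of "\<lambda>j. if (i \<in> P) \<noteq> (k + j \<in> P) then 1 else (0::nat)"] by simp
    also have "\<dots> = card {j\<in>{..<k}. (i \<in> P) \<noteq> (k + j \<in> P)}"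
      by (simp add: sum.If_cases Int_def conj_commute)
    also have "\<dots> = (if i \<in> P then k - q else q)"
    proof (cases "i \<in> P")
      case True
      have "{j\<in>{..<k}. k + j \<notin> P} = {..<k} - {j\<in>{..<k}. k + j \<in> P}" by auto
      then show ?thesis using True by (simp add: q_def) (subst card_Diff_subset; auto)
    qed (simp add: q_def)
    finally show ?thesis .
  qed
  have "(\<Sum>s<k. card {i\<in>{..<k}. (i \<in> P) \<noteq> (k + (i + s) mod k \<in> P)}) =
      (\<Sum>s<k. \<Sum>i<k. if (i \<in> P) \<noteq> (k + (i + s) mod k \<in> P) then 1 else 0)"
    by (simp add: sum.If_cases Int_def conj_commute)
  also have "\<dots> = (\<Sum>i<k. if i \<in> P then k - q else q)"
    by (subst sum.swap) (rule sum.cong[OF refl crossings_of])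
  also have "\<dots> = p * (k - q) + card ({..<k} - P) * q"
    by (simp add: sum.If_cases p_def Int_commute Diff_eq)
  also have "card ({..<k} - P) = k - p"
  proof -
    have "{..<k} - P = {..<k} - (P \<inter> {..<k})" by auto
    then show ?thesis by (simp add: card_Diff_subset p_def)
  qed
  finally show ?thesis .
qed

text \<open>Averaging over the shifts: if P meets p of the first k and q of the next k numbers,
  with p + q = k, then the crossings add up to p^2 + q^2 >= k^2 / 2.\<close>
lemma exists_shift_with_many_crossings:
  fixes k :: nat
  assumes k: "0 < k" and card_P: "card (P \<inter> {..<2 * k}) = k"
  shows "\<exists>s<k. k \<le> 2 * card {i\<in>{..<k}. (i \<in> P) \<noteq> (k + (i + s) mod k \<in> P)}"
proof (rule ccontr)
  define c where "c s = card {i\<in>{..<k}. (i \<in> P) \<noteq> (k + (i + s) mod k \<in> P)}" for s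
  define p where "p = card (P \<inter> {..<k})"
  define q where "q = card {j\<in>{..<k}. k + j \<in> P}"
  assume no_shift: "\<not> ?thesis"
  have few: "2 * c s + 1 \<le> k" if "s < k" for s
  proof -
    have "\<not> k \<le> 2 * c s" using that no_shift unfolding c_def by blast
    then show ?thesis by linarith
  qed
  have split: "P \<inter> {..<2 * k} = (P \<inter> {..<k}) \<union> (\<lambda>j. k + j) ` {j\<in>{..<k}. k + j \<in> P}"
    by (auto simp: image_iff) (metis add_diff_inverse_nat add_less_imp_less_left mult_2 not_less)
  have "card ((\<lambda>j. k + j) ` {j\<in>{..<k}. k + j \<in> P}) = q"
    unfolding q_def by (rule card_image) (simp add: inj_on_def)
  moreover have "card (P \<inter> {..<2 * k}) = p + card ((\<lambda>j. k + j) ` {j\<in>{..<k}. k + j \<in> P})"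
    unfolding split p_def by (rule card_Un_disjoint) auto
  ultimately have pq: "p + q = k" using card_P by simp
  have "(\<Sum>s<k. c s) = p * (k - q) + (k - p) * q"
    unfolding c_def p_def q_def by (rule sum_card_crossings[OF k])
  also have "\<dots> = p * p + q * q" using pq by (metis add_diff_cancel_left' add_diff_cancel_right')
  finally have sum_c: "(\<Sum>s<k. c s) = p * p + q * q" .
  have "(\<Sum>s<k. 2 * c s + 1) \<le> (\<Sum>s<k. k)"
    using few by (intro sum_mono) auto
  moreover have "(\<Sum>s<k. 2 * c s + 1) = 2 * (\<Sum>s<k. c s) + k"
    by (simp only: sum.distrib sum_distrib_left[symmetric]) simp
  ultimately have "2 * (p * p + q * q) + k \<le> k * k" using sum_c by simp
  moreover have "k * k \<le> 2 * (p * p + q * q)"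
  proof -
    have "0 \<le> (int p - int q)\<^sup>2" by simp
    then have "int (2 * (p * q)) \<le> int (p * p + q * q)" by (simp add: power2_eq_square algebra_simps)
    then have "2 * (p * q) \<le> p * p + q * q" by (simp only: of_nat_le_iff)
    moreover have "k * k = p * p + 2 * (p * q) + q * q" using pq by (auto simp: algebra_simps)
    ultimately show ?thesis by (simp add: algebra_simps)
  qed
  ultimately show False using k by linarith
qed

section \<open>The hard polynomial and its branching program\<close>

definition var :: "nat \<Rightarrow> nat \<Rightarrow> nat" where
  "var i t = prod_encode (i, t)"

definition part :: "nat \<Rightarrow> nat \<Rightarrow> nat set" where
  "part n i = var i ` {..<n}"

definition var_monom :: "nat \<Rightarrow> nat \<Rightarrow> nat \<Rightarrow>\<^sub>0 nat" where
  "var_monom i t = Poly_Mapping.single (var i t) 1"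

definition var_poly :: "nat \<Rightarrow> nat \<Rightarrow> 'a::comm_semiring_1 mpoly" where
  "var_poly i t = Poly_Mapping.single (var_monom i t) 1"

lemma var_eq [simp]: "var a b = var c e \<longleftrightarrow> a = c \<and> b = e"
  by (auto simp: var_def prod_encode_eq)

lemma var_in_part [simp]: "var j t \<in> part n i \<longleftrightarrow> j = i \<and> t < n"
  by (auto simp: part_def)

lemma finite_part [simp]: "finite (part n i)"
  by (simp add: part_def)

lemma card_part: "card (part n i) = n"
  unfolding part_def by (subst card_image) (auto simp: inj_on_def)

lemma part_disjoint: "i \<noteq> j \<Longrightarrow> part n i \<inter> part n j = {}"
  by (auto simp: part_def)

lemma var_partition_part: "var_partition n d (part n)"
  by (simp add: var_partition_def card_part part_disjoint)

lemma lookup_var_monom: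
  "Poly_Mapping.lookup (var_monom i t) (var j e) = (if i = j \<and> t = e then 1 else 0)"
  by (auto simp: var_monom_def lookup_single when_def)

lemma keys_var_poly [simp]:
  "Poly_Mapping.keys (var_poly i t :: 'a::comm_semiring_1 mpoly) = {var_monom i t}"
  by (simp add: var_poly_def)

lemma set_multilinear_0 [simp]: "set_multilinear X S 0"
  by (simp add: set_multilinear_def)

lemma set_multilinear_sum:
  "(\<And>i. i \<in> I \<Longrightarrow> set_multilinear X S (f i)) \<Longrightarrow> set_multilinear X S (sum f I)"
proof -
  assume a: "\<And>i. i \<in> I \<Longrightarrow> set_multilinear X S (f i)"
  show ?thesis unfolding set_multilinear_def
  proof
    fix m assume "m \<in> Poly_Mapping.keys (sum f I)"
    then obtain i where "i \<in> I" "m \<in> Poly_Mapping.keys (f i)" using keys_sum[of f I] by blast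
    then show "(\<forall>x\<in>Poly_Mapping.keys m. \<exists>i\<in>S. x \<in> X i) \<and> (\<forall>i\<in>S. (\<Sum>x\<in>X i. Poly_Mapping.lookup m x) = 1)"
      using a unfolding set_multilinear_def by blast
  qed
qed

lemma set_multilinear_mult_var_poly:
  assumes "set_multilinear (part n) S f" "j \<notin> S" "t < n"
  shows "set_multilinear (part n) (insert j S) (f * (var_poly j t :: 'a::comm_semiring_1 mpoly))"
  unfolding set_multilinear_def
proof
  fix m assume "m \<in> Poly_Mapping.keys (f * var_poly j t)"
  then obtain a where a: "a \<in> Poly_Mapping.keys f" and m: "m = a + var_monom j t"
    using keys_mult[of f "var_poly j t"] by auto
  have a_multilinear: "(\<forall>x\<in>Poly_Mapping.keys a. \<exists>i\<in>S. x \<in> part n i) \<and> (\<forall>i\<in>S. (\<Sum>x\<in>part n i. Poly_Mapping.lookup a x) = 1)"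
    using assms(1) a by (simp add: set_multilinear_def)
  have keys_var: "Poly_Mapping.keys (var_monom j t) = {var j t}" by (simp add: var_monom_def)
  have vars_covered: "\<forall>x\<in>Poly_Mapping.keys m. \<exists>i\<in>insert j S. x \<in> part n i"
    using keys_add[of a "var_monom j t"] a_multilinear keys_var assms(3) unfolding m by auto
  have block_degree_var: "(\<Sum>x\<in>part n i. Poly_Mapping.lookup (var_monom j t) x) = (if i = j then 1 else 0)" for i
  proof -
    have "(\<Sum>x\<in>part n i. Poly_Mapping.lookup (var_monom j t) x) = (\<Sum>x\<in>part n i. if var j t = x then 1 else 0)"
      by (simp add: var_monom_def lookup_single when_def)
    also have "\<dots> = (if var j t \<in> part n i then 1 else 0)" by simp
    finally show ?thesis using assms(3) by auto
  qed
  have a_avoids_j: "(\<Sum>x\<in>part n j. Poly_Mapping.lookup a x) = 0"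
  proof (rule sum.neutral, rule ballI)
    fix x assume x: "x \<in> part n j"
    show "Poly_Mapping.lookup a x = 0"
    proof (rule ccontr)
      assume "Poly_Mapping.lookup a x \<noteq> 0"
      then have "x \<in> Poly_Mapping.keys a" by (simp add: in_keys_iff)
      then obtain i where "i \<in> S" "x \<in> part n i" using a_multilinear by blast
      then show False using x assms(2) part_disjoint[of i j n] by auto
    qed
  qed
  have block_degrees: "\<forall>i\<in>insert j S. (\<Sum>x\<in>part n i. Poly_Mapping.lookup m x) = 1"
  proof
    fix i assume i: "i \<in> insert j S"
    have "(\<Sum>x\<in>part n i. Poly_Mapping.lookup m x) =
          (\<Sum>x\<in>part n i. Poly_Mapping.lookup a x) + (\<Sum>x\<in>part n i. Poly_Mapping.lookup (var_monom j t) x)"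
      unfolding m by (simp add: lookup_add sum.distrib)
    then show "(\<Sum>x\<in>part n i. Poly_Mapping.lookup m x) = 1"
      using i block_degree_var a_avoids_j a_multilinear assms(2) by (cases "i = j") auto
  qed
  show "(\<forall>x\<in>Poly_Mapping.keys m. \<exists>i\<in>insert j S. x \<in> part n i) \<and>
        (\<forall>i\<in>insert j S. (\<Sum>x\<in>part n i. Poly_Mapping.lookup m x) = 1)"
    using vars_covered block_degrees by blast
qed

lemma sum_lessThan_mult: "(\<Sum>u<(B::nat) * m. h u) = (\<Sum>s<B. \<Sum>t<m. h (s * m + t))"
proof -
  have "sum h {a..<a + m} = (\<Sum>t<m. h (a + t))" for a
    by (induction m) auto
  then show ?thesis using sum.nat_group[of h m B] by simp
qed

lemma mult_add_less_mult:
  assumes "s < (B::nat)" "t < m"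
  shows "s * m + t < B * m"
proof -
  have "s * m + t < Suc s * m" using assms(2) by simp
  also have "\<dots> \<le> B * m" using assms(1) by (intro mult_right_mono) auto
  finally show ?thesis .
qed

lemma sum_PiE_lessThan_Suc:
  "(\<Sum>\<tau>\<in>Pi\<^sub>E {..<Suc i} (\<lambda>_. A). h \<tau>) = (\<Sum>y\<in>A. \<Sum>g\<in>Pi\<^sub>E {..<i} (\<lambda>_. A). h (g(i := y)))"
proof -
  have "Pi\<^sub>E {..<Suc i} (\<lambda>_. A) = (\<lambda>(y, g). g(i := y)) ` (A \<times> Pi\<^sub>E {..<i} (\<lambda>_. A))"
    by (simp add: lessThan_Suc PiE_insert_eq)
  moreover have "inj_on (\<lambda>(y, g). g(i := y)) (A \<times> Pi\<^sub>E {..<i} (\<lambda>_. A))"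
    using inj_combinator[of i "{..<i}" "\<lambda>_. A"] by simp
  ultimately have "(\<Sum>\<tau>\<in>Pi\<^sub>E {..<Suc i} (\<lambda>_. A). h \<tau>) =
     (\<Sum>x\<in>A \<times> Pi\<^sub>E {..<i} (\<lambda>_. A). h (case x of (y, g) \<Rightarrow> g(i := y)))"
    by (simp add: sum.reindex)
  also have "\<dots> = (\<Sum>(y,g)\<in>A \<times> Pi\<^sub>E {..<i} (\<lambda>_. A). h (g(i := y)))"
    by (simp add: prod.case_distrib)
  also have "\<dots> = (\<Sum>y\<in>A. \<Sum>g\<in>Pi\<^sub>E {..<i} (\<lambda>_. A). h (g(i := y)))"
    by (simp add: sum.cartesian_product)
  finally show ?thesis .
qed

lemma sum_delta_conj:
  assumes "finite A"
  shows "(\<Sum>j\<in>A. if j = p \<and> Q j then (1::nat) else 0) = (if p \<in> A \<and> Q p then 1 else 0)"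
proof -
  have "(\<Sum>j\<in>A. if j = p \<and> Q j then (1::nat) else 0) = (\<Sum>j\<in>A. if j = p then (if Q p then 1 else 0) else 0)"
    by (intro sum.cong) auto
  then show ?thesis using assms by simp
qed

context
  fixes n d :: nat
begin

text \<open>For n = 1 there is no tag variable x(j, 1), so no pairs are used at all.\<close>
definition "npairs = (if 2 \<le> n then d div 3 else 0)"

definition "nshifts = max 1 npairs"

definition "tag s j = (if j < 3 * npairs \<and> j = 2 * npairs + s then 1 else (0::nat))"

definition "shift_order s l =
  (if l < 2 * npairs then (if even l then l div 2 else npairs + (l div 2 + s) mod npairs) else l)"

text \<open>
  Node s * n + t of an inner layer lies on the branch of shift s and remembers the value t
  read at the last even layer; s * n is the hub of that branch. Along branch s, layer 2j
  reads x(j, t), layer 2j + 1 reads x(npairs + (j + s) mod npairs, t) and returns to the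
  hub, and every layer l \<ge> 2 npairs reads the tag variable x(l, tag s l).
\<close>
definition "layer_width l = (if l = 0 \<or> l = d then 1 else nshifts * n)"

definition "hub l s = (if l = 0 \<or> l = d then 0 else s * n)"

definition branch_edge :: "nat \<Rightarrow> nat \<Rightarrow> nat \<Rightarrow> 'a::comm_semiring_1 mpoly" where
  "branch_edge l u v = (let s = (if l = 0 then v div n else u div n) in
     if l < 2 * npairs then
       (if even l then (if u = hub l s \<and> v div n = s then var_poly (l div 2) (v mod n) else 0)
        else (if v = hub (Suc l) s then var_poly (npairs + (l div 2 + s) mod npairs) (u mod n) else 0))
     else (if u = hub l s \<and> v = hub (Suc l) s then var_poly l (tag s l) else 0))"

definition edge_label :: "nat \<Rightarrow> nat \<Rightarrow> nat \<Rightarrow> 'a::comm_semiring_1 mpoly" where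
  "edge_label l u v =
    (if l < d \<and> u < layer_width l \<and> v < layer_width (Suc l) then branch_edge l u v else 0)"

definition shift_abp :: "'a::comm_semiring_1 abp" where
  "shift_abp = (d, layer_width, edge_label)"

definition pair_monom :: "nat \<Rightarrow> (nat \<Rightarrow> nat) \<Rightarrow> nat \<Rightarrow> nat \<Rightarrow>\<^sub>0 nat" where
  "pair_monom s \<tau> i = (\<Sum>j<i. var_monom j (\<tau> j) + var_monom (npairs + (j + s) mod npairs) (\<tau> j))"

definition tag_monom :: "nat \<Rightarrow> nat \<Rightarrow> nat \<Rightarrow>\<^sub>0 nat" where
  "tag_monom s l = (\<Sum>j\<in>{2 * npairs..<l}. var_monom j (tag s j))"

definition "full_monom s \<tau> = pair_monom s \<tau> npairs + tag_monom s d"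

definition hard_poly :: "'a::comm_semiring_1 mpoly" where
  "hard_poly =
    (\<Sum>s<nshifts. \<Sum>\<tau>\<in>Pi\<^sub>E {..<npairs} (\<lambda>_. {..<n}). Poly_Mapping.single (full_monom s \<tau>) 1)"

lemma depth_shift_abp [simp]: "depth shift_abp = d"
  by (simp add: shift_abp_def depth_def)

lemma wd_shift_abp [simp]: "wd shift_abp = layer_width"
  by (simp add: shift_abp_def wd_def)

lemma lab_shift_abp [simp]: "lab shift_abp = edge_label"
  by (simp add: shift_abp_def lab_def)

lemma npairs_pos_imp: "0 < npairs \<Longrightarrow> 2 \<le> n \<and> 3 * npairs \<le> d"
  by (auto simp: npairs_def split: if_splits)

lemma hub_lt_layer_width: "1 \<le> n \<Longrightarrow> s < nshifts \<Longrightarrow> hub l s < layer_width l"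
  by (auto simp: hub_def layer_width_def)

lemma nshifts_pos: "0 < nshifts"
  by (simp add: nshifts_def)

lemma edge_label_even:
  assumes "1 \<le> n" "l < 2 * npairs" "even l" "u < layer_width l" "s < nshifts" "t < n"
  shows "edge_label l u (s * n + t) = (if u = hub l s then var_poly (l div 2) t else 0)"
proof -
  have kf: "2 \<le> n" "3 * npairs \<le> d" using npairs_pos_imp assms(2) by auto
  have sl: "Suc l < d" "l < d" using kf assms(2) by auto
  have w: "layer_width (Suc l) = nshifts * n" using sl by (simp add: layer_width_def)
  have v: "s * n + t < nshifts * n" by (rule mult_add_less_mult) (use assms in auto)
  have dv: "(s * n + t) div n = s" "(s * n + t) mod n = t" using assms(6) by auto
  have "edge_label l u (s * n + t) = branch_edge l u (s * n + t)" using sl v w assms(4) by (simp add: edge_label_def)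
  also have "\<dots> = (let s' = (if l = 0 then s else u div n) in
       if u = hub l s' \<and> s = s' then var_poly (l div 2) t else 0)"
    unfolding branch_edge_def Let_def dv using assms(2,3) by simp
  also have "\<dots> = (if u = hub l s then var_poly (l div 2) t else 0)"
  proof (cases "l = 0")
    case True
    then show ?thesis by (simp add: Let_def)
  next
    case False
    have "u = hub l (u div n) \<and> s = u div n \<longleftrightarrow> u = hub l s"
      using False sl assms(1) by (auto simp: hub_def)
    then show ?thesis using False by (simp add: Let_def)
  qed
  finally show ?thesis .
qed

lemma edge_label_odd:
  assumes "1 \<le> n" "l < 2 * npairs" "odd l" "u < nshifts * n" "s < nshifts"
  shows "edge_label l u (s * n) = (if u div n = s then var_poly (npairs + (l div 2 + s) mod npairs) (u mod n) else 0)"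
proof -
  have kf: "2 \<le> n" "3 * npairs \<le> d" using npairs_pos_imp assms(2) by auto
  have l0: "l \<noteq> 0" using assms(3) by (metis even_zero)
  have sl: "Suc l < d" "l < d" "l \<noteq> 0" using kf assms(2) l0 by auto
  have w: "layer_width (Suc l) = nshifts * n" "layer_width l = nshifts * n" using sl by (auto simp: layer_width_def)
  have v: "s * n < nshifts * n" using assms(1,5) by simp
  have e: "s * n = u div n * n \<longleftrightarrow> u div n = s" using assms(1) by auto
  have h: "hub (Suc l) (u div n) = u div n * n" using sl by (simp add: hub_def)
  have "edge_label l u (s * n) = branch_edge l u (s * n)" using sl v w assms(4) by (simp add: edge_label_def)
  also have "\<dots> = (if s * n = hub (Suc l) (u div n) then var_poly (npairs + (l div 2 + u div n) mod npairs) (u mod n) else 0)"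
    unfolding branch_edge_def Let_def using assms(2,3) sl by simp
  also have "\<dots> = (if u div n = s then var_poly (npairs + (l div 2 + s) mod npairs) (u mod n) else 0)"
    unfolding h e by auto
  finally show ?thesis .
qed

lemma edge_label_tail:
  assumes "1 \<le> n" "2 * npairs \<le> l" "Suc l < d" "u < layer_width l" "s < nshifts"
  shows "edge_label l u (s * n) = (if u = hub l s then var_poly l (tag s l) else 0)"
proof -
  have sl: "l < d" using assms by auto
  have w: "layer_width (Suc l) = nshifts * n" using assms(3) by (auto simp: layer_width_def)
  have v: "s * n < nshifts * n" using assms(1,5) by simp
  have dvs: "s * n div n = s" using assms(1) by simp
  have "edge_label l u (s * n) = branch_edge l u (s * n)" using sl v w assms(4) by (simp add: edge_label_def)
  also have "\<dots> = (let s' = (if l = 0 then s else u div n) in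
       if u = hub l s' \<and> s * n = hub (Suc l) s' then var_poly l (tag s' l) else 0)"
    unfolding branch_edge_def Let_def using assms(1,2) by (cases "l = 0") (simp_all add: dvs, auto simp: hub_def)
  also have "\<dots> = (if u = hub l s then var_poly l (tag s l) else 0)"
  proof (cases "l = 0")
    case True
    then show ?thesis using assms(3) by (simp add: Let_def hub_def)
  next
    case False
    have "u = hub l (u div n) \<and> s * n = hub (Suc l) (u div n) \<longleftrightarrow> u = hub l s"
      using False sl assms(1,3) by (auto simp: hub_def)
    moreover have "hub l s = s * n" using False sl by (simp add: hub_def)
    ultimately show ?thesis using False dvs by (auto simp: Let_def)
  qed
  finally show ?thesis .
qed

lemma sum_last_layer:
  assumes "1 \<le> n" "2 * npairs \<le> l" "Suc l = d"
  shows "(\<Sum>u<layer_width l. f u * edge_label l u 0) = (\<Sum>s<nshifts. f (hub l s) * (var_poly l (tag s l) :: 'a::comm_semiring_1 mpoly))"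
proof (cases "l = 0")
  case True
  then have k0: "npairs = 0" "nshifts = 1" using assms by (auto simp: nshifts_def)
  have "edge_label 0 0 0 = (var_poly 0 (tag 0 0) :: 'a mpoly)"
    using assms True k0 by (simp add: layer_width_def edge_label_def branch_edge_def hub_def Let_def)
  then show ?thesis using True k0 by (simp add: layer_width_def hub_def)
next
  case False
  have w: "layer_width l = nshifts * n" using False assms by (simp add: layer_width_def)
  have "(\<Sum>u<nshifts * n. f u * edge_label l u 0) = (\<Sum>s<nshifts. \<Sum>t<n. f (s * n + t) * edge_label l (s * n + t) 0)"
    by (rule sum_lessThan_mult)
  also have "\<dots> = (\<Sum>s<nshifts. \<Sum>t<n. if t = 0 then f (hub l s) * var_poly l (tag s l) else 0)"
  proof (intro sum.cong refl)
    fix s t assume st: "s \<in> {..<nshifts}" "t \<in> {..<n}"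
    have lt: "s * n + t < nshifts * n" by (rule mult_add_less_mult) (use st in auto)
    have dv: "(s * n + t) div n = s" using st by auto
    have h1: "hub l s = s * n" "hub (Suc l) s = 0" using False assms by (auto simp: hub_def)
    have "edge_label l (s * n + t) 0 = branch_edge l (s * n + t) 0" using lt w assms by (simp add: edge_label_def layer_width_def)
    also have "\<dots> = (if s * n + t = hub l s then var_poly l (tag s l) else 0)"
      unfolding branch_edge_def Let_def dv using False assms(2) h1 by simp
    also have "\<dots> = (if t = 0 then var_poly l (tag s l) else 0)" using h1 by simp
    finally have *: "edge_label l (s * n + t) 0 = (if t = 0 then var_poly l (tag s l) else (0::'a mpoly))" .
    show "f (s * n + t) * edge_label l (s * n + t) 0 = (if t = 0 then f (hub l s) * var_poly l (tag s l) else 0)"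
      using h1 * by (cases "t = 0") auto
  qed
  also have "\<dots> = (\<Sum>s<nshifts. f (hub l s) * var_poly l (tag s l))"
    using assms(1) by simp
  finally show ?thesis using w by simp
qed

lemma pair_monom_upd: "pair_monom s (g(i := y)) (Suc i) = pair_monom s g i + var_monom i y + var_monom (npairs + (i + s) mod npairs) y"
proof -
  have "pair_monom s (g(i := y)) i = pair_monom s g i" unfolding pair_monom_def by (intro sum.cong) auto
  then show ?thesis by (simp add: pair_monom_def add.assoc)
qed

lemma node_poly_odd_layer:
  assumes "1 \<le> n" "i < npairs" "s < nshifts" "t < n"
    and A: "node_poly (shift_abp :: 'a::comm_semiring_1 abp) (2 * i) (hub (2 * i) s) =
           (\<Sum>\<tau>\<in>Pi\<^sub>E {..<i} (\<lambda>_. {..<n}). Poly_Mapping.single (pair_monom s \<tau> i) 1)"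
  shows "node_poly (shift_abp :: 'a abp) (Suc (2 * i)) (s * n + t) =
           (\<Sum>\<tau>\<in>Pi\<^sub>E {..<i} (\<lambda>_. {..<n}). Poly_Mapping.single (pair_monom s \<tau> i + var_monom i t) 1)"
proof -
  have "node_poly (shift_abp :: 'a abp) (Suc (2 * i)) (s * n + t) =
        (\<Sum>u<layer_width (2 * i). node_poly (shift_abp :: 'a abp) (2 * i) u * edge_label (2 * i) u (s * n + t))" by simp
  also have "\<dots> = (\<Sum>u<layer_width (2 * i). if u = hub (2 * i) s then node_poly (shift_abp :: 'a abp) (2 * i) u * var_poly i t else 0)"
    using assms(1-4) by (intro sum.cong refl) (simp add: edge_label_even)
  also have "\<dots> = node_poly (shift_abp :: 'a abp) (2 * i) (hub (2 * i) s) * var_poly i t"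
    using hub_lt_layer_width[OF assms(1,3)] by simp
  also have "\<dots> = (\<Sum>\<tau>\<in>Pi\<^sub>E {..<i} (\<lambda>_. {..<n}). Poly_Mapping.single (pair_monom s \<tau> i + var_monom i t) 1)"
    by (simp add: A sum_distrib_right var_poly_def mult_single)
  finally show ?thesis .
qed

lemma node_poly_even_hub:
  assumes "1 \<le> n"
  shows "i \<le> npairs \<Longrightarrow> s < nshifts \<Longrightarrow> node_poly (shift_abp :: 'a::comm_semiring_1 abp) (2 * i) (hub (2 * i) s) =
           (\<Sum>\<tau>\<in>Pi\<^sub>E {..<i} (\<lambda>_. {..<n}). Poly_Mapping.single (pair_monom s \<tau> i) 1)"
proof (induction i arbitrary: s)
  case 0
  then show ?case by (simp add: hub_def pair_monom_def)
next
  case (Suc i)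
  have ik: "i < npairs" using Suc by simp
  have kf: "2 \<le> n" "3 * npairs \<le> d" using npairs_pos_imp ik by auto
  have hb: "hub (2 * Suc i) s = s * n" using kf Suc.prems by (auto simp: hub_def)
  have w: "layer_width (Suc (2 * i)) = nshifts * n" using kf ik by (auto simp: layer_width_def)
  let ?R = "npairs + (i + s) mod npairs"
  have "node_poly (shift_abp :: 'a abp) (2 * Suc i) (hub (2 * Suc i) s) =
        node_poly (shift_abp :: 'a abp) (Suc (Suc (2 * i))) (s * n)"
    unfolding hb by (simp del: node_poly.simps)
  also have "\<dots> = (\<Sum>u<nshifts * n. node_poly (shift_abp :: 'a abp) (Suc (2 * i)) u * edge_label (Suc (2 * i)) u (s * n))"
    by (simp only: node_poly.simps wd_shift_abp lab_shift_abp w)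
  also have "\<dots> = (\<Sum>u<nshifts * n. if u div n = s then node_poly (shift_abp :: 'a abp) (Suc (2 * i)) u * var_poly ?R (u mod n) else 0)"
    using assms ik Suc.prems by (intro sum.cong refl) (simp add: edge_label_odd)
  also have "\<dots> = (\<Sum>s'<nshifts. \<Sum>t<n. if s' = s then node_poly (shift_abp :: 'a abp) (Suc (2 * i)) (s' * n + t) * var_poly ?R t else 0)"
    by (subst sum_lessThan_mult) (intro sum.cong refl, simp)
  also have "\<dots> = (\<Sum>t<n. node_poly (shift_abp :: 'a abp) (Suc (2 * i)) (s * n + t) * var_poly ?R t)"
    using Suc.prems by (subst sum.swap) (simp del: node_poly.simps)
  also have "\<dots> = (\<Sum>t<n. \<Sum>\<tau>\<in>Pi\<^sub>E {..<i} (\<lambda>_. {..<n}). Poly_Mapping.single (pair_monom s \<tau> i + var_monom i t + var_monom ?R t) 1)"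
  proof (intro sum.cong refl)
    fix t assume t: "t \<in> {..<n}"
    have "node_poly (shift_abp :: 'a abp) (Suc (2 * i)) (s * n + t) =
           (\<Sum>\<tau>\<in>Pi\<^sub>E {..<i} (\<lambda>_. {..<n}). Poly_Mapping.single (pair_monom s \<tau> i + var_monom i t) 1)"
      using node_poly_odd_layer[OF assms ik Suc.prems(2) _ Suc.IH] t Suc.prems by simp
    then show "node_poly (shift_abp :: 'a abp) (Suc (2 * i)) (s * n + t) * var_poly ?R t =
       (\<Sum>\<tau>\<in>Pi\<^sub>E {..<i} (\<lambda>_. {..<n}). Poly_Mapping.single (pair_monom s \<tau> i + var_monom i t + var_monom ?R t) 1)"
      by (simp add: sum_distrib_right var_poly_def mult_single)
  qed
  also have "\<dots> = (\<Sum>\<tau>\<in>Pi\<^sub>E {..<Suc i} (\<lambda>_. {..<n}). Poly_Mapping.single (pair_monom s \<tau> (Suc i)) 1)"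
    by (simp add: sum_PiE_lessThan_Suc pair_monom_upd)
  finally show ?case by simp
qed

lemma tag_monom_Suc: "2 * npairs \<le> l \<Longrightarrow> tag_monom s (Suc l) = tag_monom s l + var_monom l (tag s l)"
  by (simp add: tag_monom_def sum.atLeastLessThan_Suc)

lemma node_poly_tail_hub:
  assumes "1 \<le> n"
  shows "2 * npairs + j < d \<Longrightarrow> s < nshifts \<Longrightarrow> node_poly (shift_abp :: 'a::comm_semiring_1 abp) (2 * npairs + j) (hub (2 * npairs + j) s) =
           (\<Sum>\<tau>\<in>Pi\<^sub>E {..<npairs} (\<lambda>_. {..<n}). Poly_Mapping.single (pair_monom s \<tau> npairs + tag_monom s (2 * npairs + j)) 1)"
proof (induction j arbitrary: s)
  case 0
  then show ?case using node_poly_even_hub[OF assms, of npairs s] by (simp add: tag_monom_def)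
next
  case (Suc j)
  let ?l = "2 * npairs + j"
  have hb: "hub (Suc ?l) s = s * n" using Suc.prems by (simp add: hub_def)
  have "node_poly (shift_abp :: 'a abp) (2 * npairs + Suc j) (hub (2 * npairs + Suc j) s) =
        node_poly (shift_abp :: 'a abp) (Suc ?l) (s * n)"
    using hb by (simp del: node_poly.simps)
  also have "\<dots> = (\<Sum>u<layer_width ?l. node_poly (shift_abp :: 'a abp) ?l u * edge_label ?l u (s * n))"
    by (simp only: node_poly.simps wd_shift_abp lab_shift_abp)
  also have "\<dots> = (\<Sum>u<layer_width ?l. if u = hub ?l s then node_poly (shift_abp :: 'a abp) ?l u * var_poly ?l (tag s ?l) else 0)"
    using assms Suc.prems by (intro sum.cong refl) (simp add: edge_label_tail del: node_poly.simps)
  also have "\<dots> = node_poly (shift_abp :: 'a abp) ?l (hub ?l s) * var_poly ?l (tag s ?l)"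
    using hub_lt_layer_width[OF assms Suc.prems(2)] by (simp del: node_poly.simps)
  also have "\<dots> = (\<Sum>\<tau>\<in>Pi\<^sub>E {..<npairs} (\<lambda>_. {..<n}). Poly_Mapping.single (pair_monom s \<tau> npairs + tag_monom s (Suc ?l)) 1)"
    using Suc.IH[of s] Suc.prems by (simp add: sum_distrib_right var_poly_def mult_single tag_monom_Suc add.assoc del: node_poly.simps)
  finally show ?case by simp
qed

lemma node_poly_shift_abp_end:
  assumes "1 \<le> n"
  shows "node_poly (shift_abp :: 'a::comm_semiring_1 abp) d 0 = hard_poly"
proof (cases d)
  case 0
  have k0: "npairs = 0" unfolding npairs_def using 0 by simp
  then have b1: "nshifts = 1" unfolding nshifts_def by simp
  show ?thesis unfolding hard_poly_def full_monom_def pair_monom_def tag_monom_def using 0 k0 b1 by simp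
next
  case (Suc l)
  have l2: "2 * npairs \<le> l" using npairs_pos_imp Suc by (cases "npairs = 0") auto
  obtain j where j: "l = 2 * npairs + j" using l2 le_Suc_ex by blast
  have lt: "2 * npairs + j < d" using j Suc by linarith
  have "node_poly (shift_abp :: 'a abp) d 0 = node_poly (shift_abp :: 'a abp) (Suc l) 0"
    by (rule arg_cong[where f = "\<lambda>x. node_poly (shift_abp :: 'a abp) x 0"]) (rule Suc)
  also have "\<dots> = (\<Sum>u<layer_width l. node_poly (shift_abp :: 'a abp) l u * edge_label l u 0)"
    by (simp only: node_poly.simps wd_shift_abp lab_shift_abp)
  also have "\<dots> = (\<Sum>s<nshifts. node_poly (shift_abp :: 'a abp) l (hub l s) * var_poly l (tag s l))"
    by (rule sum_last_layer[OF assms l2 Suc[symmetric]])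
  also have "\<dots> = (\<Sum>s<nshifts. \<Sum>\<tau>\<in>Pi\<^sub>E {..<npairs} (\<lambda>_. {..<n}). Poly_Mapping.single (full_monom s \<tau>) 1)"
  proof (intro sum.cong refl)
    fix s assume s: "s \<in> {..<nshifts}"
    have "node_poly (shift_abp :: 'a abp) l (hub l s) =
           (\<Sum>\<tau>\<in>Pi\<^sub>E {..<npairs} (\<lambda>_. {..<n}). Poly_Mapping.single (pair_monom s \<tau> npairs + tag_monom s l) 1)"
      using node_poly_tail_hub[OF assms lt, of s] s unfolding j by (simp del: node_poly.simps)
    moreover have "full_monom s \<tau> = pair_monom s \<tau> npairs + tag_monom s l + var_monom l (tag s l)" for \<tau>
    proof -
      have "tag_monom s d = tag_monom s (Suc l)" by (rule arg_cong[OF Suc])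
      then show ?thesis unfolding full_monom_def using tag_monom_Suc[OF l2] by (simp add: add.assoc)
    qed
    ultimately show "node_poly (shift_abp :: 'a abp) l (hub l s) * var_poly l (tag s l) =
          (\<Sum>\<tau>\<in>Pi\<^sub>E {..<npairs} (\<lambda>_. {..<n}). Poly_Mapping.single (full_monom s \<tau>) 1)"
      by (simp add: sum_distrib_right var_poly_def mult_single del: node_poly.simps)
  qed
  finally show ?thesis by (simp add: hard_poly_def)
qed

lemma bij_betw_shift_order: "bij_betw (shift_order s) {..<d} {..<d}"
proof -
  have pairs: "shift_order s l < 2 * npairs \<and> (shift_order s l < npairs \<longleftrightarrow> even l)"
    if "l < 2 * npairs" for l
    using that by (auto simp: shift_order_def)
  have tail: "shift_order s l = l" if "\<not> l < 2 * npairs" for l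
    using that by (simp add: shift_order_def)
  have "inj_on (shift_order s) {..<d}"
  proof (rule inj_onI)
    fix a b assume eq: "shift_order s a = shift_order s b"
    show "a = b"
    proof (cases "a < 2 * npairs \<and> b < 2 * npairs")
      case True
      then have "even a \<longleftrightarrow> even b" using pairs eq by metis
      moreover have "a div 2 = b div 2"
      proof (cases "even a")
        case False
        then have "(a div 2 + s) mod npairs = (b div 2 + s) mod npairs"
          using eq \<open>even a \<longleftrightarrow> even b\<close> True by (simp add: shift_order_def)
        moreover have "a div 2 < npairs" "b div 2 < npairs" using True by auto
        ultimately show ?thesis by (rule add_mod_cancel_right[rotated 2])
      qed (use eq \<open>even a \<longleftrightarrow> even b\<close> True in \<open>simp add: shift_order_def\<close>)
      ultimately show ?thesis by (metis div_mult_mod_eq mod2_eq_if)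
    next
      case False
      then show ?thesis using eq pairs tail by (metis not_less)
    qed
  qed
  moreover have "shift_order s ` {..<d} \<subseteq> {..<d}"
  proof -
    have "shift_order s l < d" if "l < d" for l
      using that pairs[of l] tail[of l] npairs_pos_imp by (cases "l < 2 * npairs") auto
    then show ?thesis by auto
  qed
  ultimately show ?thesis by (simp add: bij_betw_def endo_inj_surj)
qed

lemma branch_shift_lt:
  assumes "l < d" "u < layer_width l" "v < layer_width (Suc l)"
  shows "(if l = 0 then v div n else u div n) < nshifts"
proof (cases "l = 0 \<and> Suc l = d")
  case True
  then show ?thesis using assms(3) nshifts_pos by (simp add: layer_width_def)
next
  case False
  then show ?thesis using assms by (auto simp: layer_width_def less_mult_imp_div_less)
qed

lemma tag_lt: "1 \<le> n \<Longrightarrow> tag s l < n"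
  using npairs_pos_imp by (cases "tag s l = 0") (auto simp: tag_def split: if_splits)

lemma edge_label_nonzero_cases:
  assumes "1 \<le> n" "edge_label l u v \<noteq> (0::'a::comm_semiring_1 mpoly)"
  shows "\<exists>s<nshifts. \<exists>t<n. edge_label l u v = (var_poly (shift_order s l) t :: 'a mpoly) \<and> l < d \<and> u < layer_width l \<and>
            (l = 0 \<or> u div n = s) \<and> (Suc l = d \<or> v div n = s)"
proof -
  have r: "l < d" "u < layer_width l" "v < layer_width (Suc l)" and c: "edge_label l u v = (branch_edge l u v :: 'a mpoly)"
    using assms(2) by (auto simp: edge_label_def split: if_splits)
  define s where "s = (if l = 0 then v div n else u div n)"
  have s0: "l = 0 \<or> u div n = s" by (simp add: s_def)
  have sB: "s < nshifts" using r unfolding s_def by (rule branch_shift_lt)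
  have cs: "branch_edge l u v = (if l < 2 * npairs then
       (if even l then (if u = hub l s \<and> v div n = s then var_poly (l div 2) (v mod n) else 0)
        else (if v = hub (Suc l) s then var_poly (npairs + (l div 2 + s) mod npairs) (u mod n) else 0))
     else (if u = hub l s \<and> v = hub (Suc l) s then var_poly l (tag s l) else (0::'a mpoly)))"
    unfolding branch_edge_def s_def Let_def by simp
  show ?thesis
  proof (cases "l < 2 * npairs")
    case True
    then have kf: "2 \<le> n" "3 * npairs \<le> d" using npairs_pos_imp by auto
    show ?thesis
    proof (cases "even l")
      case True
      then have "u = hub l s \<and> v div n = s" "edge_label l u v = (var_poly (shift_order s l) (v mod n) :: 'a mpoly)"
        using assms(2) c cs \<open>l < 2 * npairs\<close> by (auto simp: shift_order_def split: if_splits)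
      moreover have "v mod n < n" using assms(1) by simp
      ultimately show ?thesis using sB s0 r by blast
    next
      case False
      then have "v = hub (Suc l) s" "edge_label l u v = (var_poly (shift_order s l) (u mod n) :: 'a mpoly)"
        using assms(2) c cs \<open>l < 2 * npairs\<close> by (auto simp: shift_order_def split: if_splits)
      moreover have "hub (Suc l) s = s * n" using \<open>l < 2 * npairs\<close> kf by (simp add: hub_def)
      moreover have "u mod n < n" using assms(1) by simp
      moreover have "v div n = s" using calculation(1,3) assms(1) by simp
      ultimately show ?thesis using sB s0 r by blast
    qed
  next
    case False
    then have h: "u = hub l s \<and> v = hub (Suc l) s" "edge_label l u v = (var_poly (shift_order s l) (tag s l) :: 'a mpoly)"
      using assms(2) c cs by (auto simp: shift_order_def split: if_splits)
    have "tag s l < n" using assms(1) by (rule tag_lt)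
    moreover have "Suc l = d \<or> v div n = s" using h(1) assms(1) by (auto simp: hub_def)
    ultimately show ?thesis using sB s0 r h(2) by blast
  qed
qed

definition "blocks_read l v = (if l = d then {..<d} else shift_order (v div n) ` {..<l})"

lemma node_poly_set_multilinear:
  assumes "1 \<le> n"
  shows "l \<le> d \<Longrightarrow> v < layer_width l \<Longrightarrow> set_multilinear (part n) (blocks_read l v) (node_poly (shift_abp :: 'a::comm_semiring_1 abp) l v)"
proof (induction l arbitrary: v)
  case 0
  have "blocks_read 0 v = {}" by (simp add: blocks_read_def)
  then show ?case by (simp add: set_multilinear_def)
next
  case (Suc l)
  show ?case
  proof (simp only: node_poly.simps wd_shift_abp lab_shift_abp, rule set_multilinear_sum)
    fix u assume u: "u \<in> {..<layer_width l}"
    show "set_multilinear (part n) (blocks_read (Suc l) v) (node_poly (shift_abp :: 'a abp) l u * edge_label l u v)"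
    proof (cases "edge_label l u v = (0::'a mpoly)")
      case False
      from edge_label_nonzero_cases[OF assms False] obtain s t where st: "s < nshifts" "t < n"
        "edge_label l u v = (var_poly (shift_order s l) t :: 'a mpoly)" "l < d" "l = 0 \<or> u div n = s" "Suc l = d \<or> v div n = s"
        by blast
      have "blocks_read l u = shift_order s ` {..<l}" using st by (auto simp: blocks_read_def)
      moreover have "set_multilinear (part n) (blocks_read l u) (node_poly (shift_abp :: 'a abp) l u)"
        using Suc.IH[of u] Suc.prems u by simp
      ultimately have ih: "set_multilinear (part n) (shift_order s ` {..<l}) (node_poly (shift_abp :: 'a abp) l u)"
        by simp
      have nin: "shift_order s l \<notin> shift_order s ` {..<l}"
        using st(4) by (simp add: inj_on_image_mem_iff[OF bij_betw_imp_inj_on[OF bij_betw_shift_order]])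
      have "set_multilinear (part n) (insert (shift_order s l) (shift_order s ` {..<l})) (node_poly (shift_abp :: 'a abp) l u * var_poly (shift_order s l) t)"
        by (rule set_multilinear_mult_var_poly[OF ih nin st(2)])
      moreover have "insert (shift_order s l) (shift_order s ` {..<l}) = blocks_read (Suc l) v"
      proof (cases "Suc l = d")
        case True
        have "insert (shift_order s l) (shift_order s ` {..<l}) = shift_order s ` {..<Suc l}" by (simp add: lessThan_Suc)
        also have "\<dots> = shift_order s ` {..<d}" using True by simp
        also have "\<dots> = {..<d}" by (rule bij_betw_imp_surj_on[OF bij_betw_shift_order])
        finally show ?thesis using True by (simp add: blocks_read_def)
      next
        case False
        then have "v div n = s" using st(6) by simp
        then show ?thesis using False by (simp add: blocks_read_def lessThan_Suc)
      qed
      ultimately show ?thesis using st(3) by simp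
    qed simp
  qed
qed

lemma shift_abp_wf:
  assumes n: "1 \<le> n"
  shows "abp_wf (shift_abp :: 'a::comm_semiring_1 abp)"
proof -
  have lp: "linear_poly (edge_label l u v :: 'a mpoly)" for l u v
  proof (cases "edge_label l u v = (0::'a mpoly)")
    case False
    then obtain s t where "edge_label l u v = (var_poly (shift_order s l) t :: 'a mpoly)" using edge_label_nonzero_cases[OF n] by blast
    then show ?thesis by (simp add: linear_poly_def mdeg_def var_monom_def)
  qed (simp add: linear_poly_def)
  then show ?thesis by (auto simp: abp_wf_def layer_width_def edge_label_def)
qed

lemma shift_abp_sm_abp:
  assumes n: "1 \<le> n"
  shows "sm_abp (part n) d (shift_abp :: 'a::comm_semiring_1 abp)"
proof -
  have "shift_order s ` {..<l} \<subseteq> {..<d}" if "l \<le> d" for s l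
    using bij_betw_imp_surj_on[OF bij_betw_shift_order, of s] that by (metis image_mono lessThan_subset_iff)
  then have "blocks_read l v \<subseteq> {..<d}" if "l \<le> d" for l v
    using that by (simp add: blocks_read_def)
  then have "\<forall>l\<le>d. \<forall>v<layer_width l. \<exists>S\<subseteq>{..<d}. set_multilinear (part n) S (node_poly (shift_abp :: 'a abp) l v)"
    using node_poly_set_multilinear[OF n] by blast
  then show ?thesis using shift_abp_wf[OF n] unfolding sm_abp_def by simp
qed

lemma shift_abp_size:
  assumes n: "1 \<le> n" and d: "1 \<le> d"
  shows "abp_size (shift_abp :: 'a::comm_semiring_1 abp) \<le> 3 * (n + d) ^ 3"
proof -
  have "nshifts \<le> d" using d by (auto simp: nshifts_def npairs_def)
  then have "nshifts * n \<le> d * n" by simp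
  then have w: "layer_width l \<le> d * n" for l using n d by (auto simp: layer_width_def)
  have "abp_size (shift_abp :: 'a abp) = (\<Sum>l\<le>d. layer_width l)" by (simp add: abp_size_def)
  also have "\<dots> \<le> of_nat (card {..d}) * (d * n)" by (rule sum_bounded_above) (use w in auto)
  also have "\<dots> = (d + 1) * d * n" by (simp add: algebra_simps)
  also have "\<dots> \<le> (n + d) * (n + d) * (n + d)" using n by (intro mult_mono) auto
  also have "\<dots> \<le> 3 * (n + d) ^ 3" by (simp add: power3_eq_cube)
  finally show ?thesis .
qed

lemma shift_abp_computes_hard_poly: "1 \<le> n \<Longrightarrow> abp_computes shift_abp hard_poly"
  by (simp add: abp_computes_def node_poly_shift_abp_end)

lemma hard_poly_set_multilinear:
  assumes "1 \<le> n"
  shows "set_multilinear (part n) {..<d} (hard_poly :: 'a::comm_semiring_1 mpoly)"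
proof -
  have "set_multilinear (part n) {..<d} (node_poly (shift_abp :: 'a abp) d 0)"
    using node_poly_set_multilinear[OF assms, of d 0] by (simp add: blocks_read_def layer_width_def)
  then show ?thesis by (simp add: node_poly_shift_abp_end[OF assms])
qed

section \<open>The lower bound for ordered branching programs\<close>

lemma lookup_full_monom: "Poly_Mapping.lookup (full_monom s \<tau>) (var p t) =
   (\<Sum>j<npairs. (if j = p \<and> \<tau> j = t then 1 else 0) + (if npairs + (j + s) mod npairs = p \<and> \<tau> j = t then 1 else 0))
   + (\<Sum>j\<in>{2 * npairs..<d}. if j = p \<and> tag s j = t then 1 else 0)"
  by (simp add: full_monom_def pair_monom_def tag_monom_def lookup_add lookup_sum lookup_var_monom)

lemma lookup_full_monom_left:
  assumes "0 < npairs" "i < npairs"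
  shows "Poly_Mapping.lookup (full_monom s \<tau>) (var i t) = (if \<tau> i = t then 1 else 0)"
proof -
  have "(\<Sum>j<npairs. (if j = i \<and> \<tau> j = t then 1 else 0) + (if npairs + (j + s) mod npairs = i \<and> \<tau> j = t then 1 else (0::nat)))
        = (\<Sum>j<npairs. if j = i \<and> \<tau> j = t then 1 else 0)"
    using assms by (intro sum.cong) auto
  also have "\<dots> = (if \<tau> i = t then 1 else 0)" using assms by (simp add: sum_delta_conj)
  finally show ?thesis using assms unfolding lookup_full_monom by (simp add: sum_delta_conj)
qed

lemma lookup_full_monom_right:
  assumes "0 < npairs" "i < npairs"
  shows "Poly_Mapping.lookup (full_monom s \<tau>) (var (npairs + (i + s) mod npairs) t) = (if \<tau> i = t then 1 else 0)"
proof -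
  have m: "(i + s) mod npairs < npairs" using assms by simp
  have "(\<Sum>j<npairs. (if j = npairs + (i + s) mod npairs \<and> \<tau> j = t then 1 else 0) + (if npairs + (j + s) mod npairs = npairs + (i + s) mod npairs \<and> \<tau> j = t then 1 else (0::nat)))
        = (\<Sum>j<npairs. if j = i \<and> \<tau> j = t then 1 else 0)"
  proof (intro sum.cong refl)
    fix j assume j: "j \<in> {..<npairs}"
    have "npairs + (j + s) mod npairs = npairs + (i + s) mod npairs \<longleftrightarrow> j = i" using add_mod_cancel_right[of j npairs i s] j assms by auto
    then show "(if j = npairs + (i + s) mod npairs \<and> \<tau> j = t then 1 else 0) + (if npairs + (j + s) mod npairs = npairs + (i + s) mod npairs \<and> \<tau> j = t then 1 else (0::nat))
       = (if j = i \<and> \<tau> j = t then 1 else 0)" using j by auto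
  qed
  also have "\<dots> = (if \<tau> i = t then 1 else 0)" using assms by (simp add: sum_delta_conj)
  moreover have "npairs + (i + s) mod npairs < 2 * npairs" using m by linarith
  then have "(\<Sum>j\<in>{2 * npairs..<d}. if j = npairs + (i + s) mod npairs \<and> tag s j = t then 1 else (0::nat)) = 0"
    by (intro sum.neutral) auto
  ultimately show ?thesis unfolding lookup_full_monom by simp
qed

lemma lookup_full_monom_tag:
  assumes "0 < npairs" "j0 < npairs"
  shows "Poly_Mapping.lookup (full_monom s \<tau>) (var (2 * npairs + j0) t) = (if t = (if j0 = s then 1 else 0) then 1 else 0)"
proof -
  have kd: "3 * npairs \<le> d" using npairs_pos_imp assms by auto
  have "(\<Sum>j<npairs. (if j = 2 * npairs + j0 \<and> \<tau> j = t then 1 else 0) + (if npairs + (j + s) mod npairs = 2 * npairs + j0 \<and> \<tau> j = t then 1 else (0::nat))) = 0"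
  proof (intro sum.neutral ballI)
    fix j assume "j \<in> {..<npairs}"
    have "(j + s) mod npairs < npairs" using assms by simp
    then have "npairs + (j + s) mod npairs \<noteq> 2 * npairs + j0" by linarith
    moreover have "j \<noteq> 2 * npairs + j0" using \<open>j \<in> {..<npairs}\<close> by simp
    ultimately show "(if j = 2 * npairs + j0 \<and> \<tau> j = t then 1 else 0) + (if npairs + (j + s) mod npairs = 2 * npairs + j0 \<and> \<tau> j = t then 1 else (0::nat)) = 0"
      by simp
  qed
  moreover have "tag s (2 * npairs + j0) = (if j0 = s then 1 else 0)" using assms by (simp add: tag_def)
  moreover have "2 * npairs + j0 \<in> {2 * npairs..<d}" using kd assms by simp
  ultimately show ?thesis unfolding lookup_full_monom by (simp add: sum_delta_conj)
qed

lemma keys_full_monom: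
  assumes "0 < npairs" "\<tau> \<in> Pi\<^sub>E {..<npairs} (\<lambda>_. {..<n})"
  shows "Poly_Mapping.keys (full_monom s \<tau>) \<subseteq> (\<Union>i<d. part n i)"
proof -
  let ?U = "(\<Union>i<d. part n i)"
  have bounds: "2 \<le> n" "3 * npairs \<le> d" using npairs_pos_imp assms by auto
  have keys_var: "Poly_Mapping.keys (var_monom i t) \<subseteq> ?U" if "i < d" "t < n" for i t
    using that by (auto simp: var_monom_def)
  have keys_plus: "Poly_Mapping.keys (a + b) \<subseteq> ?U" if "Poly_Mapping.keys a \<subseteq> ?U" "Poly_Mapping.keys b \<subseteq> ?U" for a b :: "nat \<Rightarrow>\<^sub>0 nat"
    using keys_add[of a b] that by auto
  have keys_sum_subset: "Poly_Mapping.keys (sum f A) \<subseteq> ?U" if "\<And>j. j \<in> A \<Longrightarrow> Poly_Mapping.keys (f j) \<subseteq> ?U" for f :: "nat \<Rightarrow> nat \<Rightarrow>\<^sub>0 nat" and A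
    using keys_sum[of f A] that by blast
  have keys_pairs: "Poly_Mapping.keys (pair_monom s \<tau> npairs) \<subseteq> ?U" unfolding pair_monom_def
  proof (rule keys_sum_subset, rule keys_plus)
    fix j assume j: "j \<in> {..<npairs}"
    then have t: "\<tau> j < n" using assms(2) by auto
    show "Poly_Mapping.keys (var_monom j (\<tau> j)) \<subseteq> ?U" using j t bounds by (intro keys_var) auto
    have "(j + s) mod npairs < npairs" using assms by simp
    then show "Poly_Mapping.keys (var_monom (npairs + (j + s) mod npairs) (\<tau> j)) \<subseteq> ?U" using t bounds by (intro keys_var) auto
  qed
  have "Poly_Mapping.keys (tag_monom s d) \<subseteq> ?U" unfolding tag_monom_def
  proof (rule keys_sum_subset)
    fix j assume j: "j \<in> {2 * npairs..<d}"
    have "tag s j < n" using bounds by (simp add: tag_def)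
    then show "Poly_Mapping.keys (var_monom j (tag s j)) \<subseteq> ?U" using j by (intro keys_var) auto
  qed
  then show ?thesis unfolding full_monom_def using keys_pairs keys_plus by blast
qed

definition "read_vars P = (\<Union>j\<in>P. part n j)"

definition "unread_vars P = (\<Union>j\<in>{..<d} - P. part n j)"

definition glue :: "nat set \<Rightarrow> (nat \<Rightarrow>\<^sub>0 nat) \<Rightarrow> (nat \<Rightarrow>\<^sub>0 nat) \<Rightarrow> nat \<Rightarrow>\<^sub>0 nat" where
  "glue P m m' = restrict_monom (read_vars P) m + restrict_monom (unread_vars P) m'"

lemma var_in_read_vars [simp]: "var j t \<in> read_vars P \<longleftrightarrow> j \<in> P \<and> t < n"
  by (auto simp: read_vars_def)

lemma var_in_unread_vars [simp]: "var j t \<in> unread_vars P \<longleftrightarrow> j < d \<and> j \<notin> P \<and> t < n"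
  by (auto simp: unread_vars_def)

lemma read_vars_disjoint_unread_vars: "read_vars P \<inter> unread_vars P = {}"
  by (auto simp: read_vars_def unread_vars_def part_def)

lemma lookup_glue:
  "Poly_Mapping.lookup (glue P m m') x =
    (if x \<in> read_vars P then Poly_Mapping.lookup m x
     else if x \<in> unread_vars P then Poly_Mapping.lookup m' x else 0)"
  using read_vars_disjoint_unread_vars[of P] by (auto simp: glue_def lookup_add lookup_restrict_monom)

lemma glue_full_monom_self:
  assumes "0 < npairs" "\<tau> \<in> Pi\<^sub>E {..<npairs} (\<lambda>_. {..<n})"
  shows "glue P (full_monom s \<tau>) (full_monom s \<tau>) = full_monom s \<tau>"
proof (rule poly_mapping_eqI)
  fix x
  have "x \<notin> read_vars P \<Longrightarrow> x \<notin> unread_vars P \<Longrightarrow> Poly_Mapping.lookup (full_monom s \<tau>) x = 0"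
    using keys_full_monom[OF assms, of s] by (auto simp: in_keys_iff part_def)
  then show "Poly_Mapping.lookup (glue P (full_monom s \<tau>) (full_monom s \<tau>)) x =
      Poly_Mapping.lookup (full_monom s \<tau>) x"
    by (simp add: lookup_glue)
qed

lemma full_monom_eq_glue_shift:
  assumes "2 \<le> n" "s' < npairs" "full_monom s' \<tau>' = glue P (full_monom s \<tau>a) (full_monom s \<tau>b)"
  shows "s' = s"
proof (rule ccontr)
  assume "s' \<noteq> s"
  let ?x = "var (2 * npairs + s') 1"
  have "3 * npairs \<le> d" using npairs_pos_imp assms(2) by simp
  then have "?x \<in> read_vars P \<or> ?x \<in> unread_vars P" using assms(1,2) by simp
  moreover have "Poly_Mapping.lookup (full_monom s \<tau>) ?x = 0" for \<tau>
    using lookup_full_monom_tag[of s' s \<tau> 1] assms(2) \<open>s' \<noteq> s\<close> by simp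
  ultimately have "Poly_Mapping.lookup (full_monom s' \<tau>') ?x = 0"
    unfolding assms(3) lookup_glue by auto
  moreover have "Poly_Mapping.lookup (full_monom s' \<tau>') ?x = 1"
    using lookup_full_monom_tag[of s' s' \<tau>' 1] assms(2) by simp
  ultimately show False by simp
qed

lemma pair_value_eq_of_lookup_eq:
  assumes "i < npairs" "j = i \<or> j = npairs + (i + s) mod npairs"
    and "Poly_Mapping.lookup (full_monom s \<tau>') (var j (\<tau>' i)) =
      Poly_Mapping.lookup (full_monom s \<tau>) (var j (\<tau>' i))"
  shows "\<tau> i = \<tau>' i"
proof -
  have pos: "0 < npairs" using assms(1) by simp
  have lookup: "Poly_Mapping.lookup (full_monom s \<sigma>) (var j (\<tau>' i)) = (if \<sigma> i = \<tau>' i then 1 else 0)"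
    for \<sigma>
    using assms(2) lookup_full_monom_left[OF pos assms(1), of s \<sigma> "\<tau>' i"]
      lookup_full_monom_right[OF pos assms(1), of s \<sigma> "\<tau>' i"] by blast
  from assms(3) have "(if \<tau>' i = \<tau>' i then 1 else 0) = (if \<tau> i = \<tau>' i then 1 else (0::nat))"
    by (simp only: lookup)
  then show ?thesis by (cases "\<tau> i = \<tau>' i") simp_all
qed

lemma full_monom_eq_glue_values:
  assumes "2 \<le> n" "\<tau>' \<in> Pi\<^sub>E {..<npairs} (\<lambda>_. {..<n})" "i < npairs"
    and glued: "full_monom s \<tau>' = glue P (full_monom s \<tau>a) (full_monom s \<tau>b)"
  shows "i \<in> P \<or> npairs + (i + s) mod npairs \<in> P \<Longrightarrow> \<tau>a i = \<tau>' i"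
    and "i \<notin> P \<or> npairs + (i + s) mod npairs \<notin> P \<Longrightarrow> \<tau>b i = \<tau>' i"
proof -
  let ?p = "npairs + (i + s) mod npairs"
  have "3 * npairs \<le> d" using npairs_pos_imp assms(3) by simp
  moreover have "(i + s) mod npairs < npairs" using assms(3) by simp
  ultimately have in_range: "i < d" "?p < d" using assms(3) by linarith+
  have "\<tau>' i < n" using assms(2,3) by (simp add: PiE_iff)
  then have glued_at: "Poly_Mapping.lookup (full_monom s \<tau>') (var j (\<tau>' i)) =
      (if j \<in> P then Poly_Mapping.lookup (full_monom s \<tau>a) (var j (\<tau>' i))
       else Poly_Mapping.lookup (full_monom s \<tau>b) (var j (\<tau>' i)))" if "j < d" for j
    unfolding glued lookup_glue using that by simp
  show "\<tau>a i = \<tau>' i" if read: "i \<in> P \<or> ?p \<in> P"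
  proof -
    obtain j where j: "j = i \<or> j = ?p" "j \<in> P" "j < d" using read in_range by blast
    show ?thesis
      using glued_at[OF j(3)] j(2) by (intro pair_value_eq_of_lookup_eq[OF assms(3) j(1), of \<tau>' \<tau>a]) simp
  qed
  show "\<tau>b i = \<tau>' i" if unread: "i \<notin> P \<or> ?p \<notin> P"
  proof -
    obtain j where j: "j = i \<or> j = ?p" "j \<notin> P" "j < d" using unread in_range by blast
    show ?thesis
      using glued_at[OF j(3)] j(2) by (intro pair_value_eq_of_lookup_eq[OF assms(3) j(1), of \<tau>' \<tau>b]) simp
  qed
qed

lemma full_monom_eq_glue_iff:
  assumes n: "2 \<le> n" and s': "s' < npairs"
    and \<tau>: "\<tau>' \<in> Pi\<^sub>E {..<npairs} (\<lambda>_. {..<n})" "\<tau>a \<in> Pi\<^sub>E {..<npairs} (\<lambda>_. {..<n})"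
      "\<tau>b \<in> Pi\<^sub>E {..<npairs} (\<lambda>_. {..<n})"
    and agree: "\<And>i. i < npairs \<Longrightarrow> (i \<in> P) = (npairs + (i + s) mod npairs \<in> P) \<Longrightarrow> \<tau>a i = \<tau>b i"
  shows "full_monom s' \<tau>' = glue P (full_monom s \<tau>a) (full_monom s \<tau>b) \<longleftrightarrow>
    s' = s \<and> \<tau>' = \<tau>a \<and> \<tau>a = \<tau>b"
proof
  assume glued: "full_monom s' \<tau>' = glue P (full_monom s \<tau>a) (full_monom s \<tau>b)"
  then have "s' = s" using full_monom_eq_glue_shift[OF n s'] by blast
  note pair_values = full_monom_eq_glue_values[OF n \<tau>(1) _ glued[unfolded \<open>s' = s\<close>]]
  have "\<tau>' i = \<tau>a i \<and> \<tau>a i = \<tau>b i" if "i < npairs" for i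
    using pair_values[OF that] agree[OF that] by (cases "(i \<in> P) = (npairs + (i + s) mod npairs \<in> P)") auto
  then show "s' = s \<and> \<tau>' = \<tau>a \<and> \<tau>a = \<tau>b"
    using \<open>s' = s\<close> PiE_ext[OF \<tau>(1,2)] PiE_ext[OF \<tau>(2,3)] by auto
qed (use glue_full_monom_self s' \<tau>(2) in auto)

lemma hard_poly_coefficient_identity:
  fixes P :: "nat set"
  assumes n: "2 \<le> n" and s: "s < npairs"
  defines "C \<equiv> {i\<in>{..<npairs}. (i \<in> P) \<noteq> (npairs + (i + s) mod npairs \<in> P)}"
  shows "\<exists>r c. (\<forall>a. Poly_Mapping.keys (r a) \<subseteq> read_vars P) \<and>
    (\<forall>b. Poly_Mapping.keys (c b) \<subseteq> unread_vars P) \<and>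
    (\<forall>a\<in>Pi\<^sub>E C (\<lambda>_. {..<n}). \<forall>b\<in>Pi\<^sub>E C (\<lambda>_. {..<n}).
      Poly_Mapping.lookup (hard_poly :: 'a::comm_semiring_1 mpoly) (r a + c b) = (if a = b then 1 else 0))"
proof -
  have pos: "0 < npairs" using s by simp
  define \<tau> where "\<tau> a = restrict (\<lambda>i. if i \<in> C then a i else 0) {..<npairs}" for a :: "nat \<Rightarrow> nat"
  define r where "r a = restrict_monom (read_vars P) (full_monom s (\<tau> a))" for a
  define c where "c b = restrict_monom (unread_vars P) (full_monom s (\<tau> b))" for b
  have "Poly_Mapping.lookup (hard_poly :: 'a mpoly) (r a + c b) = (if a = b then 1 else 0)"
    if ab: "a \<in> Pi\<^sub>E C (\<lambda>_. {..<n})" "b \<in> Pi\<^sub>E C (\<lambda>_. {..<n})" for a b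
  proof -
    have \<tau>_ab: "\<tau> a \<in> Pi\<^sub>E {..<npairs} (\<lambda>_. {..<n})" "\<tau> b \<in> Pi\<^sub>E {..<npairs} (\<lambda>_. {..<n})"
      using ab n by (auto simp: \<tau>_def)
    have "\<tau> a = \<tau> b \<longleftrightarrow> a = b"
    proof
      assume "\<tau> a = \<tau> b"
      show "a = b"
      proof (rule PiE_ext[OF ab])
        fix i assume "i \<in> C"
        then have "\<tau> a i = a i" "\<tau> b i = b i" by (auto simp: \<tau>_def C_def)
        then show "a i = b i" using \<open>\<tau> a = \<tau> b\<close> by simp
      qed
    qed simp
    moreover have "\<tau> a i = \<tau> b i" if "i < npairs" "(i \<in> P) = (npairs + (i + s) mod npairs \<in> P)" for i
      using that by (simp add: \<tau>_def C_def)
    moreover have "r a + c b = glue P (full_monom s (\<tau> a)) (full_monom s (\<tau> b))"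
      by (simp add: r_def c_def glue_def)
    ultimately have unique: "full_monom s' \<tau>' = r a + c b \<longleftrightarrow> s' = s \<and> \<tau>' = \<tau> a \<and> a = b"
      if "s' < npairs" "\<tau>' \<in> Pi\<^sub>E {..<npairs} (\<lambda>_. {..<n})" for s' \<tau>'
      using full_monom_eq_glue_iff[OF n that \<tau>_ab, of P] by auto
    have "Poly_Mapping.lookup (hard_poly :: 'a mpoly) (r a + c b) =
        (\<Sum>s'<npairs. \<Sum>\<tau>'\<in>Pi\<^sub>E {..<npairs} (\<lambda>_. {..<n}). if full_monom s' \<tau>' = r a + c b then 1 else 0)"
      using pos by (simp add: hard_poly_def nshifts_def lookup_sum lookup_single when_def)
    also have "\<dots> = (\<Sum>s'<npairs. if s' = s then
        (\<Sum>\<tau>'\<in>Pi\<^sub>E {..<npairs} (\<lambda>_. {..<n}). if \<tau>' = \<tau> a \<and> a = b then 1 else 0) else 0)"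
      using unique by (intro sum.cong refl) auto
    also have "\<dots> = (if a = b then 1 else 0)"
      using s \<tau>_ab by (cases "a = b") (simp_all add: finite_PiE)
    finally show ?thesis .
  qed
  then show ?thesis
    by (intro exI[of _ r] exI[of _ c]) (auto simp: r_def c_def keys_restrict_monom)
qed

lemma ordered_sm_abp_width_ge_hard_poly:
  fixes A :: "'a::field abp"
  assumes n: "2 \<le> n" and d: "3 \<le> d"
    and ordered: "ordered_sm_abp (part n) d A" and computes: "abp_computes A hard_poly"
  shows "\<exists>c. npairs \<le> 2 * c \<and> n ^ c \<le> abp_width A"
proof -
  have pos: "0 < npairs" and "2 * npairs \<le> d" using n d by (auto simp: npairs_def)
  obtain \<sigma> where wf: "abp_wf A" and depth: "depth A = d" and \<sigma>: "\<sigma> permutes {..<d}"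
    and labels: "\<forall>l<d. \<forall>u v. linear_form_in (part n (\<sigma> l)) (lab A l u v)"
    using ordered unfolding ordered_sm_abp_def sm_abp_def by blast
  have \<sigma>_image: "\<sigma> ` {..<d} = {..<d}" by (rule permutes_image[OF \<sigma>])
  obtain l where l: "l \<le> d" "card (\<sigma> ` {..<l} \<inter> {..<2 * npairs}) = npairs"
    using exists_prefix_card_inter[of "{..<2 * npairs}" \<sigma> d npairs] \<sigma>_image \<open>2 * npairs \<le> d\<close>
    by auto
  define P where "P = \<sigma> ` {..<l}"
  define C where "C s = {i\<in>{..<npairs}. (i \<in> P) \<noteq> (npairs + (i + s) mod npairs \<in> P)}" for s
  obtain s where s: "s < npairs" and many: "npairs \<le> 2 * card (C s)"
    using exists_shift_with_many_crossings[OF pos] l(2) unfolding C_def P_def by blast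
  obtain r c where r: "\<forall>a. Poly_Mapping.keys (r a) \<subseteq> read_vars P"
    and c: "\<forall>b. Poly_Mapping.keys (c b) \<subseteq> unread_vars P"
    and coeff: "\<forall>a\<in>Pi\<^sub>E (C s) (\<lambda>_. {..<n}). \<forall>b\<in>Pi\<^sub>E (C s) (\<lambda>_. {..<n}).
      Poly_Mapping.lookup (hard_poly :: 'a mpoly) (r a + c b) = (if a = b then 1 else 0)"
    using hard_poly_coefficient_identity[OF n s, of P] unfolding C_def by blast
  have read: "read_vars P = (\<Union>i<l. part n (\<sigma> i))"
    by (auto simp: read_vars_def P_def)
  have "{l..<d} = {..<d} - {..<l}" by auto
  then have "\<sigma> ` {l..<d} = \<sigma> ` {..<d} - \<sigma> ` {..<l}"
    by (simp only:) (intro inj_on_image_set_diff[where C = "{..<d}"] permutes_inj_on[OF \<sigma>], use l(1) in auto)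
  then have "\<sigma> ` {l..<d} = {..<d} - P"
    by (simp add: \<sigma>_image P_def)
  then have unread: "unread_vars P = (\<Union>i\<in>{l..<d}. part n (\<sigma> i))"
    unfolding unread_vars_def by (metis image_image image_UN UN_extend_simps(10))
  have "card (Pi\<^sub>E (C s) (\<lambda>_. {..<n})) \<le> abp_width A"
    using read unread read_vars_disjoint_unread_vars[of P] r c coeff computes
    by (intro card_le_abp_width_of_coefficient_identity[where X = "part n" and \<sigma> = \<sigma> and r = r and c = c, OF wf depth l(1) labels])
      (auto simp: abp_computes_def depth finite_PiE C_def)
  then show ?thesis using many by (intro exI[of _ "card (C s)"]) (simp add: card_PiE C_def)
qed

lemma ordered_sm_abp_width_ge_powr:
  fixes A :: "'a::field abp"
  assumes n: "2 \<le> n" and d: "3 \<le> d"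
    and "ordered_sm_abp (part n) d A" "abp_computes A hard_poly"
  shows "real n powr (1 / 12 * real d) \<le> real (abp_width A)"
proof -
  obtain c where c: "npairs \<le> 2 * c" and width: "n ^ c \<le> abp_width A"
    using ordered_sm_abp_width_ge_hard_poly assms by blast
  have "npairs = d div 3" "0 < npairs" using n d by (auto simp: npairs_def)
  moreover have "d \<le> 3 * (d div 3) + 2" by linarith
  ultimately have "d \<le> 12 * c" using c d by linarith
  then have "1 / 12 * real d \<le> real c" by linarith
  then have "real n powr (1 / 12 * real d) \<le> real n powr real c"
    using n by (intro powr_mono) auto
  also have "\<dots> = real (n ^ c)" using n by (simp add: powr_realpow)
  also have "\<dots> \<le> real (abp_width A)" using width by linarith
  finally show ?thesis .
qed

end

theorem theorem1p8:
  "\<exists>(G :: nat \<Rightarrow> nat \<Rightarrow> 'a::field mpoly) (X :: nat \<Rightarrow> nat \<Rightarrow> nat \<Rightarrow> nat set).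
     (\<forall>n d. var_partition n d (X n d) \<and> set_multilinear (X n d) {..<d} (G n d)) \<and>
     (\<exists>c::nat. \<forall>n d. 1 \<le> n \<longrightarrow> 1 \<le> d \<longrightarrow>
        (\<exists>A :: 'a abp. sm_abp (X n d) d A \<and> abp_computes A (G n d) \<and>
                      abp_size A \<le> c * (n + d) ^ c)) \<and>
     (\<exists>\<epsilon>::real. \<epsilon> > 0 \<and> (\<exists>N::nat. \<forall>n d. N \<le> n \<longrightarrow> N \<le> d \<longrightarrow>
        (\<forall>A :: 'a abp. ordered_sm_abp (X n d) d A \<longrightarrow> abp_computes A (G n d) \<longrightarrow>
            real (abp_width A) \<ge> real n powr (\<epsilon> * real d))))"
proof -
  \<comment> \<open>For n = 0 the blocks are empty, so only the zero polynomial is set-multilinear.\<close>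
  define G :: "nat \<Rightarrow> nat \<Rightarrow> 'a mpoly" where "G n d = (if n = 0 then 0 else hard_poly n d)" for n d
  show ?thesis
  proof (intro exI[of _ G] exI[of _ "\<lambda>n d. part n"] conjI exI[of _ "3::nat"] exI[of _ "1 / 12::real"]
      allI impI)
    show "var_partition n d (part n)" for n d
      by (rule var_partition_part)
    show "set_multilinear (part n) {..<d} (G n d)" for n d
      by (cases "n = 0") (simp_all add: G_def hard_poly_set_multilinear)
    show "\<exists>A :: 'a abp. sm_abp (part n) d A \<and> abp_computes A (G n d) \<and> abp_size A \<le> 3 * (n + d) ^ 3"
      if "1 \<le> n" "1 \<le> d" for n d
      using that by (intro exI[of _ "shift_abp n d"])
        (simp add: G_def shift_abp_sm_abp shift_abp_computes_hard_poly shift_abp_size)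
    show "real n powr (1 / 12 * real d) \<le> real (abp_width A)"
      if "3 \<le> n" "3 \<le> d" "ordered_sm_abp (part n) d A" "abp_computes A (G n d)" for n d and A :: "'a abp"
      using that ordered_sm_abp_width_ge_powr[of n d A] by (simp add: G_def)
  qed simp
qed

end
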